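(* Let $f_1(x)=\sum_{k\ge1}k^{-1}\sqrt2\sin(\pi kx)$ (as an element of $L^2(0,1)$). Then $f_1$ is a PDCP function, and $f_1$ does not belong to the range of $V=UP(I-S)$.
   Context: $H^2$ is the Hardy space on the open unit disk, $S$ the shift $Sf(z)=zf(z)$, $H^2_0=\{f\in H^2:f(0)=0\}$, and $P$ the orthogonal projection of $H^2$ onto $H^2_0$. $U:H^2_0\to L^2(0,1)$ is the unitary operator with $U(z^k)=\sqrt2\sin(\pi kx)$ for $k\ge1$, and $V=UP(I-S):H^2\to L^2(0,1)$. A function $\phi\in L^2(0,1)$, extended to $\mathbb{R}$ as an odd $2$-periodic function, is a PDCP function if $\mathrm{span}\{\phi(nx):n\ge1\}$ (restricted to $(0,1)$) is dense in $L^2(0,1)$. *)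

theory Defs
  imports "HOL-Complex_Analysis.Complex_Analysis"
begin

section \<open>L^2(0,1), represented by complex functions on the reals (only values on (0,1) matter)\<close>

definition L2_01 :: "(real \<Rightarrow> complex) set" where
  "L2_01 = {h. h \<in> borel_measurable (restrict_space lborel {0<..<1}) \<and>
       (\<integral>\<^sup>+ x. ennreal ((cmod (h x))\<^sup>2) * indicator {0<..<1} x \<partial>lborel) < \<infinity>}"

definition L2_dist2 :: "(real \<Rightarrow> complex) \<Rightarrow> (real \<Rightarrow> complex) \<Rightarrow> ennreal" where
  "L2_dist2 f g = (\<integral>\<^sup>+ x. ennreal ((cmod (f x - g x))\<^sup>2) * indicator {0<..<1} x \<partial>lborel)"

definition sine_partial :: "(nat \<Rightarrow> complex) \<Rightarrow> nat \<Rightarrow> real \<Rightarrow> complex" where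
  "sine_partial c n x = (\<Sum>k\<in>{1..n}. c k * complex_of_real (sqrt 2 * sin (pi * real k * x)))"

definition L2_sine_sum :: "(nat \<Rightarrow> complex) \<Rightarrow> (real \<Rightarrow> complex) \<Rightarrow> bool" where
  "L2_sine_sum c F \<longleftrightarrow> F \<in> L2_01 \<and> ((\<lambda>n. L2_dist2 (sine_partial c n) F) \<longlonglongrightarrow> 0)"

definition taylor_coeff :: "(complex \<Rightarrow> complex) \<Rightarrow> nat \<Rightarrow> complex" where
  "taylor_coeff f n = (deriv ^^ n) f 0 / of_nat (fact n)"

definition H2 :: "(complex \<Rightarrow> complex) set" where
  "H2 = {f. f holomorphic_on ball 0 1 \<and> summable (\<lambda>n. (cmod (taylor_coeff f n))\<^sup>2)}"

definition shiftS :: "(complex \<Rightarrow> complex) \<Rightarrow> (complex \<Rightarrow> complex)" where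
  "shiftS f = (\<lambda>z. z * f z)"

definition projP :: "(complex \<Rightarrow> complex) \<Rightarrow> (complex \<Rightarrow> complex)" where
  "projP f = (\<lambda>z. f z - f 0)"

text \<open>U : H^2_0 -> L^2(0,1), U(z^k) = sqrt 2 sin(pi k x), extended unitarily:
  U h = F  iff  F is the L^2 sum of sum_{k>=1} (coeff_k h) sqrt 2 sin(pi k x).\<close>
definition U_rel :: "(complex \<Rightarrow> complex) \<Rightarrow> (real \<Rightarrow> complex) \<Rightarrow> bool" where
  "U_rel h F \<longleftrightarrow> L2_sine_sum (taylor_coeff h) F"

definition in_range_V :: "(real \<Rightarrow> complex) \<Rightarrow> bool" where
  "in_range_V F \<longleftrightarrow> (\<exists>g\<in>H2. U_rel (projP (\<lambda>z. g z - shiftS g z)) F)"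

text \<open>Odd 2-periodic extension of a function given on (0,1).\<close>
definition odd_ext :: "(real \<Rightarrow> complex) \<Rightarrow> real \<Rightarrow> complex" where
  "odd_ext \<phi> x = (let y = x - 2 * of_int \<lfloor>(x + 1) / 2\<rfloor> in
                   if 0 \<le> y then \<phi> y else - \<phi> (- y))"

definition PDCP :: "(real \<Rightarrow> complex) \<Rightarrow> bool" where
  "PDCP \<phi> \<longleftrightarrow> \<phi> \<in> L2_01 \<and>
     (\<forall>h\<in>L2_01. \<forall>\<epsilon>>0. \<exists>N (c::nat \<Rightarrow> complex).
        (\<lambda>x. \<Sum>n\<in>{1..N}. c n * odd_ext \<phi> (real n * x)) \<in> L2_01 \<and>
        L2_dist2 h (\<lambda>x. \<Sum>n\<in>{1..N}. c n * odd_ext \<phi> (real n * x)) < ennreal \<epsilon>)"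

end

theory Submission
  imports Defs "HOL-Computational_Algebra.Primes"
begin

text \<open>
  The sine series with coefficients \<open>1/k\<close> converges in \<open>L\<^sup>2(0,1)\<close> to the sawtooth
  \<open>\<pi>/\<surd>2 \<cdot> (1 - x)\<close>. If it were \<open>V g\<close>, the Taylor coefficients of \<open>g\<close> would satisfy
  \<open>a\<^sub>k - a\<^sub>k\<^sub>-\<^sub>1 = 1/k\<close>, so \<open>a\<^sub>k = a\<^sub>0 + H\<^sub>k\<close> could not tend to zero, contradicting \<open>g \<in> H\<^sup>2\<close>.

  For the PDCP property, \<open>f\<^sub>1(n x)\<close> is the sine series with coefficients dilated by \<open>n\<close>, so
  \<open>\<Sum> c\<^sub>n f\<^sub>1(n x)\<close> has as coefficients the Dirichlet convolution \<open>c \<star> (1/k)\<close>.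
  The sieve \<open>c = \<Prod>\<^sub>q\<^sub>\<le>\<^sub>P (\<delta>\<^sub>1 - \<delta>\<^sub>q/q)\<close> over the primes up to \<open>P\<close> makes \<open>c \<star> (1/k)\<close>
  equal to \<open>\<delta>\<^sub>1\<close> up to a tail supported beyond \<open>P\<close> of squared \<open>\<ell>\<^sup>2\<close>-norm at most \<open>1/P\<close>;
  dilating it reproduces any finite sine polynomial up to any \<open>\<epsilon>\<close>, and finite sine
  polynomials are dense in \<open>L\<^sup>2(0,1)\<close>.
\<close>

abbreviation lborel_01 :: "real measure" where
  "lborel_01 \<equiv> restrict_space lborel {0<..<1}"

definition L2_sqnorm :: "(real \<Rightarrow> complex) \<Rightarrow> ennreal" where
  "L2_sqnorm h = (\<integral>\<^sup>+ x. ennreal ((cmod (h x))\<^sup>2) * indicator {0<..<1} x \<partial>lborel)"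

lemma L2_sqnorm_restrict: "L2_sqnorm h = (\<integral>\<^sup>+ x. ennreal ((cmod (h x))\<^sup>2) \<partial>lborel_01)"
  unfolding L2_sqnorm_def by (subst nn_integral_restrict_space) auto

lemma L2_dist2_eq_sqnorm: "L2_dist2 f g = L2_sqnorm (\<lambda>x. f x - g x)"
  unfolding L2_dist2_def L2_sqnorm_def by simp

lemma L2_01_iff: "h \<in> L2_01 \<longleftrightarrow> h \<in> borel_measurable lborel_01 \<and> L2_sqnorm h < \<infinity>"
  unfolding L2_01_def L2_sqnorm_def by simp

lemma L2_dist2_commute: "L2_dist2 f g = L2_dist2 g f"
  unfolding L2_dist2_def by (simp add: norm_minus_commute)

lemma continuous_imp_measurable_01:
  "continuous_on UNIV f \<Longrightarrow> f \<in> borel_measurable lborel_01"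
  by (intro measurable_restrict_space1) (simp add: borel_measurable_continuous_onI)

lemma power2_norm_add_le:
  fixes a b :: "'a::real_normed_vector"
  shows "(norm (a + b))\<^sup>2 \<le> 2 * (norm a)\<^sup>2 + 2 * (norm b)\<^sup>2"
proof -
  have "(norm (a + b))\<^sup>2 \<le> (norm a + norm b)\<^sup>2"
    by (simp add: power_mono norm_triangle_ineq)
  also have "\<dots> \<le> 2 * (norm a)\<^sup>2 + 2 * (norm b)\<^sup>2"
    using zero_le_power2[of "norm a - norm b"] by (simp add: power2_diff power2_sum)
  finally show ?thesis .
qed

lemma L2_sqnorm_add_le:
  assumes "f \<in> borel_measurable lborel_01" "g \<in> borel_measurable lborel_01"
  shows "L2_sqnorm (\<lambda>x. f x + g x) \<le> 2 * L2_sqnorm f + 2 * L2_sqnorm g"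
proof -
  have "L2_sqnorm (\<lambda>x. f x + g x) \<le>
      (\<integral>\<^sup>+ x. 2 * ennreal ((cmod (f x))\<^sup>2) + 2 * ennreal ((cmod (g x))\<^sup>2) \<partial>lborel_01)"
    unfolding L2_sqnorm_restrict
    by (intro nn_integral_mono order.trans[OF ennreal_leI[OF power2_norm_add_le]])
       (simp add: ennreal_plus ennreal_mult)
  also have "\<dots> = 2 * L2_sqnorm f + 2 * L2_sqnorm g"
    unfolding L2_sqnorm_restrict using assms
    by (subst nn_integral_add) (auto simp: nn_integral_cmult)
  finally show ?thesis .
qed

lemma L2_sqnorm_cmult:
  assumes "f \<in> borel_measurable lborel_01"
  shows "L2_sqnorm (\<lambda>x. c * f x) = ennreal ((cmod c)\<^sup>2) * L2_sqnorm f"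
  unfolding L2_sqnorm_restrict using assms
  by (subst nn_integral_cmult[symmetric]) (auto simp: norm_mult power_mult_distrib ennreal_mult)

lemma L2_dist2_triangle:
  assumes "f \<in> borel_measurable lborel_01" "g \<in> borel_measurable lborel_01"
    "h \<in> borel_measurable lborel_01"
  shows "L2_dist2 f h \<le> 2 * L2_dist2 f g + 2 * L2_dist2 g h"
proof -
  have "L2_dist2 f h = L2_sqnorm (\<lambda>x. (f x - g x) + (g x - h x))"
    unfolding L2_dist2_eq_sqnorm by simp
  also have "\<dots> \<le> 2 * L2_dist2 f g + 2 * L2_dist2 g h"
    unfolding L2_dist2_eq_sqnorm by (rule L2_sqnorm_add_le) (use assms in auto)
  finally show ?thesis .
qed

lemma L2_01_add_cmult:
  assumes "f \<in> L2_01" "g \<in> L2_01"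
  shows "(\<lambda>x. f x + c * g x) \<in> L2_01"
proof -
  have m: "f \<in> borel_measurable lborel_01" "g \<in> borel_measurable lborel_01"
    and fin: "L2_sqnorm f < \<infinity>" "L2_sqnorm g < \<infinity>"
    using assms by (auto simp: L2_01_iff)
  have "L2_sqnorm (\<lambda>x. f x + c * g x) \<le> 2 * L2_sqnorm f + 2 * L2_sqnorm (\<lambda>x. c * g x)"
    by (rule L2_sqnorm_add_le) (use m in auto)
  also have "\<dots> = 2 * L2_sqnorm f + 2 * (ennreal ((cmod c)\<^sup>2) * L2_sqnorm g)"
    using m by (simp add: L2_sqnorm_cmult)
  also have "\<dots> < \<infinity>"
    using fin by (simp add: ennreal_mult_less_top ennreal_mult_eq_top_iff)
  finally show ?thesis using m by (auto simp: L2_01_iff)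
qed

lemma nn_integral_01_has_integral:
  fixes f :: "real \<Rightarrow> real"
  assumes "\<And>x. 0 \<le> f x" "(f has_integral I) {0..1}"
  shows "(\<integral>\<^sup>+ x. ennreal (f x) * indicator {0<..<1} x \<partial>lborel) = ennreal I"
proof -
  have "(f has_integral I) {0<..<1}"
    using assms(2) has_integral_open_interval[of f I "0::real" 1] by (simp only: box_real)
  from nn_integral_has_integral_lebesgue[OF _ this] assms(1)
  have "(\<integral>\<^sup>+ x. ennreal (f x * indicator {0<..<1} x) \<partial>lborel) = ennreal I"
    by (simp add: mult.commute)
  moreover have "(\<integral>\<^sup>+ x. ennreal (f x) * indicator {0<..<1} x \<partial>lborel) =
      (\<integral>\<^sup>+ x. ennreal (f x * indicator {0<..<1} x) \<partial>lborel)"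
    by (intro nn_integral_cong) (auto split: split_indicator)
  ultimately show ?thesis by simp
qed

lemma L2_sqnorm_le_sup:
  assumes "\<And>x. x \<in> {0..1} \<Longrightarrow> cmod (f x) \<le> \<eta>"
  shows "L2_sqnorm f \<le> ennreal (\<eta>\<^sup>2)"
proof -
  have "L2_sqnorm f \<le> (\<integral>\<^sup>+ (x::real). ennreal (\<eta>\<^sup>2) * indicator {0<..<1} x \<partial>lborel)"
    unfolding L2_sqnorm_def
  proof (intro nn_integral_mono)
    fix x
    show "ennreal ((cmod (f x))\<^sup>2) * indicator {0<..<1} x \<le> ennreal (\<eta>\<^sup>2) * indicator {0<..<1} x"
      using assms[of x] by (cases "x \<in> {0<..<1}") (auto intro!: ennreal_leI power_mono)
  qed
  also have "\<dots> = ennreal (\<eta>\<^sup>2)" by (simp add: nn_integral_cmult_indicator)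
  finally show ?thesis .
qed


lemma has_integral_real_derivative:
  fixes f f' :: "real \<Rightarrow> real"
  assumes "a \<le> b" "\<And>x. (f has_real_derivative f' x) (at x)"
  shows "(f' has_integral (f b - f a)) {a..b}"
  by (rule fundamental_theorem_of_calculus[OF assms(1)])
     (auto simp: has_real_derivative_iff_has_vector_derivative[symmetric]
           intro: has_field_derivative_at_within assms(2))

lemma has_integral_cos_pi_int:
  fixes m :: int
  shows "((\<lambda>x. cos (pi * m * x)) has_integral (if m = 0 then 1 else 0)) {0..1}"
proof (cases "m = 0")
  case False
  have "\<And>x. ((\<lambda>x. sin (pi * m * x) / (pi * m)) has_real_derivative cos (pi * m * x)) (at x)"
    using False by (auto intro!: derivative_eq_intros simp: field_simps)
  from has_integral_real_derivative[OF _ this, of 0 1] False show ?thesis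
    using sin_zero_iff_int2[of "pi * m"] by (auto simp: mult.commute)
qed (use has_integral_const_real[of 1 0 1] in simp)

lemma sine_basis_orthonormal:
  fixes j k :: nat
  shows "((\<lambda>x. (sqrt 2 * sin (pi * j * x)) * (sqrt 2 * sin (pi * k * x))) has_integral
          (if j = k \<and> j \<noteq> 0 then 1 else 0)) {0..1}"
proof -
  have eq: "(sqrt 2 * sin (pi * j * x)) * (sqrt 2 * sin (pi * k * x)) =
        cos (pi * (int j - int k) * x) - cos (pi * (int j + int k) * x)" for x
    by (simp add: cos_diff cos_add algebra_simps)
  show ?thesis
    unfolding eq
    using has_integral_diff[OF has_integral_cos_pi_int[of "int j - int k"]
                               has_integral_cos_pi_int[of "int j + int k"]]
    by (auto split: if_splits)
qed

lemma has_integral_real_sine_poly_sq: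
  fixes a :: "nat \<Rightarrow> real"
  assumes "finite A" "0 \<notin> A"
  shows "((\<lambda>x. (\<Sum>k\<in>A. a k * (sqrt 2 * sin (pi * k * x)))\<^sup>2) has_integral (\<Sum>k\<in>A. (a k)\<^sup>2)) {0..1}"
proof -
  have eq: "(\<Sum>k\<in>A. a k * (sqrt 2 * sin (pi * k * x)))\<^sup>2 =
     (\<Sum>j\<in>A. \<Sum>k\<in>A. (a j * a k) * ((sqrt 2 * sin (pi * j * x)) * (sqrt 2 * sin (pi * k * x))))" for x
    by (simp add: power2_eq_square sum_product algebra_simps)
  have "((\<lambda>x. \<Sum>j\<in>A. \<Sum>k\<in>A. (a j * a k) * ((sqrt 2 * sin (pi * j * x)) * (sqrt 2 * sin (pi * k * x))))
        has_integral (\<Sum>j\<in>A. \<Sum>k\<in>A. (a j * a k) * (if j = k \<and> j \<noteq> 0 then 1 else 0))) {0..1}"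
    by (intro has_integral_sum assms has_integral_mult_right sine_basis_orthonormal)
  also have "(\<Sum>j\<in>A. \<Sum>k\<in>A. (a j * a k) * (if j = k \<and> j \<noteq> 0 then 1 else 0)) = (\<Sum>j\<in>A. (a j)\<^sup>2)"
  proof (intro sum.cong refl)
    fix j assume "j \<in> A"
    then have "(\<Sum>k\<in>A. (a j * a k) * (if j = k \<and> j \<noteq> 0 then 1 else 0)) = (\<Sum>k\<in>A. if k = j then (a j)\<^sup>2 else 0)"
      using assms(2) by (intro sum.cong) (auto simp: power2_eq_square)
    then show "(\<Sum>k\<in>A. (a j * a k) * (if j = k \<and> j \<noteq> 0 then 1 else 0)) = (a j)\<^sup>2"
      using \<open>j \<in> A\<close> assms(1) by simp
  qed
  finally show ?thesis unfolding eq .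
qed

definition sine_poly :: "(nat \<Rightarrow> complex) \<Rightarrow> nat set \<Rightarrow> real \<Rightarrow> complex" where
  "sine_poly c A x = (\<Sum>k\<in>A. c k * complex_of_real (sqrt 2 * sin (pi * real k * x)))"

lemma sine_partial_eq_sine_poly: "sine_partial c n = sine_poly c {1..n}"
  unfolding sine_partial_def sine_poly_def by (rule ext) simp

lemma continuous_on_sine_poly: "continuous_on S (sine_poly c A)"
  unfolding sine_poly_def by (intro continuous_intros)

lemma sine_poly_measurable: "sine_poly c A \<in> borel_measurable lborel_01"
  by (rule continuous_imp_measurable_01[OF continuous_on_sine_poly])

lemma sine_partial_measurable: "sine_partial c n \<in> borel_measurable lborel_01"
  unfolding sine_partial_eq_sine_poly by (rule sine_poly_measurable)

lemma has_integral_sine_poly_sq: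
  assumes "finite A" "0 \<notin> A"
  shows "((\<lambda>x. (cmod (sine_poly c A x))\<^sup>2) has_integral (\<Sum>k\<in>A. (cmod (c k))\<^sup>2)) {0..1}"
proof -
  have "Re (sine_poly c A x) = (\<Sum>k\<in>A. Re (c k) * (sqrt 2 * sin (pi * k * x)))"
       "Im (sine_poly c A x) = (\<Sum>k\<in>A. Im (c k) * (sqrt 2 * sin (pi * k * x)))" for x
    unfolding sine_poly_def by (simp_all add: Re_sum Im_sum)
  then have "((\<lambda>x. (cmod (sine_poly c A x))\<^sup>2) has_integral
         ((\<Sum>k\<in>A. (Re (c k))\<^sup>2) + (\<Sum>k\<in>A. (Im (c k))\<^sup>2))) {0..1}"
    unfolding cmod_power2 by (simp only:) (intro has_integral_add has_integral_real_sine_poly_sq assms)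
  then show ?thesis by (simp add: cmod_power2 sum.distrib)
qed

lemma L2_sqnorm_sine_poly:
  assumes "finite A" "0 \<notin> A"
  shows "L2_sqnorm (sine_poly c A) = ennreal (\<Sum>k\<in>A. (cmod (c k))\<^sup>2)"
  unfolding L2_sqnorm_def
  by (rule nn_integral_01_has_integral[OF _ has_integral_sine_poly_sq[OF assms]]) simp

lemma L2_sqnorm_sine_partial:
  "L2_sqnorm (sine_partial c n) = ennreal (\<Sum>k\<in>{1..n}. (cmod (c k))\<^sup>2)"
  unfolding sine_partial_eq_sine_poly by (rule L2_sqnorm_sine_poly) auto


lemma L2_sine_sumD:
  assumes "L2_sine_sum b F"
  shows "F \<in> L2_01" "F \<in> borel_measurable lborel_01" "L2_sqnorm F < \<infinity>"
        "(\<lambda>n. L2_dist2 (sine_partial b n) F) \<longlonglongrightarrow> 0"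
  using assms by (auto simp: L2_sine_sum_def L2_01_iff)

lemma L2_sine_sum_sqnorm_le:
  assumes F: "L2_sine_sum b F" and C: "\<And>n. (\<Sum>k\<in>{1..n}. (cmod (b k))\<^sup>2) \<le> C"
  shows "L2_sqnorm F \<le> 2 * ennreal C"
proof -
  have "(\<lambda>n. 2 * ennreal C + 2 * L2_dist2 (sine_partial b n) F) \<longlonglongrightarrow> 2 * ennreal C + 2 * 0"
    by (intro tendsto_add tendsto_const ennreal_tendsto_cmult L2_sine_sumD(4)[OF F]) simp
  moreover have "L2_sqnorm F \<le> 2 * ennreal C + 2 * L2_dist2 (sine_partial b n) F" for n
  proof -
    have "L2_sqnorm F = L2_sqnorm (\<lambda>x. sine_partial b n x + (F x - sine_partial b n x))" by simp
    also have "\<dots> \<le> 2 * L2_sqnorm (sine_partial b n) + 2 * L2_dist2 F (sine_partial b n)"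
      unfolding L2_dist2_eq_sqnorm
      by (rule L2_sqnorm_add_le) (use L2_sine_sumD(2)[OF F] sine_partial_measurable in auto)
    also have "\<dots> \<le> 2 * ennreal C + 2 * L2_dist2 (sine_partial b n) F"
      unfolding L2_sqnorm_sine_partial L2_dist2_commute[of F]
      by (intro add_right_mono mult_left_mono ennreal_leI C) simp
    finally show ?thesis .
  qed
  ultimately show ?thesis
    by (intro tendsto_le[OF sequentially_bot _ tendsto_const]) auto
qed

lemma sine_partial_add_cmult:
  "sine_partial (\<lambda>k. b k + c * b' k) n x = sine_partial b n x + c * sine_partial b' n x"
  unfolding sine_partial_def by (simp add: sum.distrib sum_distrib_left algebra_simps)

lemma L2_sine_sum_add_cmult:
  assumes F: "L2_sine_sum b F" and G: "L2_sine_sum b' G"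
  shows "L2_sine_sum (\<lambda>k. b k + c * b' k) (\<lambda>x. F x + c * G x)"
proof -
  note FF = L2_sine_sumD[OF F] and GG = L2_sine_sumD[OF G]
  let ?bound = "\<lambda>n. 2 * L2_dist2 (sine_partial b n) F +
                     2 * (ennreal ((cmod c)\<^sup>2) * L2_dist2 (sine_partial b' n) G)"
  have le: "L2_dist2 (sine_partial (\<lambda>k. b k + c * b' k) n) (\<lambda>x. F x + c * G x) \<le> ?bound n" for n
  proof -
    have "L2_dist2 (sine_partial (\<lambda>k. b k + c * b' k) n) (\<lambda>x. F x + c * G x) =
        L2_sqnorm (\<lambda>x. (sine_partial b n x - F x) + c * (sine_partial b' n x - G x))"
      unfolding L2_dist2_eq_sqnorm sine_partial_add_cmult by (simp add: algebra_simps)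
    also have "\<dots> \<le> 2 * L2_sqnorm (\<lambda>x. sine_partial b n x - F x) +
                   2 * L2_sqnorm (\<lambda>x. c * (sine_partial b' n x - G x))"
      by (rule L2_sqnorm_add_le) (use FF GG sine_partial_measurable in auto)
    also have "\<dots> = ?bound n"
      unfolding L2_dist2_eq_sqnorm
      by (subst L2_sqnorm_cmult) (use GG sine_partial_measurable in auto)
    finally show ?thesis .
  qed
  have "?bound \<longlonglongrightarrow> 2 * 0 + 2 * (ennreal ((cmod c)\<^sup>2) * 0)"
    by (intro tendsto_add ennreal_tendsto_cmult FF(4) GG(4)) auto
  then have "?bound \<longlonglongrightarrow> 0" by simp
  then have "(\<lambda>n. L2_dist2 (sine_partial (\<lambda>k. b k + c * b' k) n) (\<lambda>x. F x + c * G x)) \<longlonglongrightarrow> 0"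
    by (rule tendsto_sandwich[rotated 2, OF tendsto_const]) (use le in auto)
  with L2_01_add_cmult[OF FF(1) GG(1)] show ?thesis
    unfolding L2_sine_sum_def by simp
qed

lemma L2_sine_sum_sine_poly:
  assumes "\<And>k. k \<notin> {1..K} \<Longrightarrow> b k = 0"
  shows "L2_sine_sum b (sine_poly b {1..K})"
proof -
  have "sine_partial b n = sine_poly b {1..K}" if "K \<le> n" for n
    unfolding sine_partial_eq_sine_poly sine_poly_def
    by (intro ext sum.mono_neutral_right) (use that assms in auto)
  then have "\<forall>\<^sub>F n in sequentially. L2_dist2 (sine_partial b n) (sine_poly b {1..K}) = 0"
    by (intro eventually_sequentiallyI[of K]) (simp add: L2_dist2_eq_sqnorm L2_sqnorm_def)
  then have "(\<lambda>n. L2_dist2 (sine_partial b n) (sine_poly b {1..K})) \<longlonglongrightarrow> 0"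
    by (rule tendsto_eventually)
  moreover have "sine_poly b {1..K} \<in> L2_01"
    unfolding L2_01_iff using L2_sqnorm_sine_poly[of "{1..K}" b] sine_poly_measurable by simp
  ultimately show ?thesis unfolding L2_sine_sum_def by simp
qed

lemma L2_sine_sum_zero_imp_coeff_zero:
  assumes "L2_sine_sum d (\<lambda>x. 0)" "1 \<le> k"
  shows "d k = 0"
proof -
  have "(\<lambda>n. ennreal (\<Sum>t\<in>{1..n}. (cmod (d t))\<^sup>2)) \<longlonglongrightarrow> 0"
    using L2_sine_sumD(4)[OF assms(1)] by (simp add: L2_dist2_eq_sqnorm L2_sqnorm_sine_partial)
  moreover have "\<forall>\<^sub>F n in sequentially. ennreal ((cmod (d k))\<^sup>2) \<le> ennreal (\<Sum>t\<in>{1..n}. (cmod (d t))\<^sup>2)"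
    by (intro eventually_sequentiallyI[of k] ennreal_leI member_le_sum) (use assms(2) in auto)
  ultimately have "ennreal ((cmod (d k))\<^sup>2) \<le> 0"
    by (intro tendsto_le[OF sequentially_bot _ tendsto_const])
  then show ?thesis by simp
qed

lemma L2_sine_sum_coeff_unique:
  assumes "L2_sine_sum b F" "L2_sine_sum b' F" "1 \<le> k"
  shows "b k = b' k"
proof -
  have "L2_sine_sum (\<lambda>t. b t + (-1) * b' t) (\<lambda>x. F x + (-1) * F x)"
    by (rule L2_sine_sum_add_cmult[OF assms(1,2)])
  from L2_sine_sum_zero_imp_coeff_zero[OF this[simplified] assms(3)] show ?thesis by simp
qed


lemma L2_dist2_le_coeff_dist:
  assumes "L2_sine_sum b F" "L2_sine_sum b' G" "\<And>n. (\<Sum>k\<in>{1..n}. (cmod (b k - b' k))\<^sup>2) \<le> C"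
  shows "L2_dist2 F G \<le> 2 * ennreal C"
proof -
  have "L2_sine_sum (\<lambda>k. b k + (-1) * b' k) (\<lambda>x. F x + (-1) * G x)"
    by (rule L2_sine_sum_add_cmult[OF assms(1,2)])
  from L2_sine_sum_sqnorm_le[OF this] assms(3) show ?thesis
    by (simp add: L2_dist2_eq_sqnorm)
qed

section \<open>The series \<open>\<Sum> k\<inverse> \<surd>2 sin(\<pi> k x)\<close> and the sawtooth\<close>

definition recip_coeff :: "nat \<Rightarrow> complex" where
  "recip_coeff k = 1 / of_nat k"

definition sawtooth :: "real \<Rightarrow> complex" where
  "sawtooth x = complex_of_real (pi / sqrt 2 * (1 - x))"

lemma has_integral_sine_sawtooth:
  assumes "1 \<le> k"
  shows "((\<lambda>x. (sqrt 2 * sin (pi * real k * x)) * (pi / sqrt 2 * (1 - x))) has_integral (1 / real k)) {0..1}"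
proof -
  define G where "G x = pi * (- (1 - x) * cos (pi * k * x) / (pi * k) - sin (pi * k * x) / (pi * k)\<^sup>2)" for x
  have k: "real k > 0" using assms by simp
  have "(G has_real_derivative pi * (cos (pi * k * x) / (pi * k) + (1 - x) * sin (pi * k * x)
          - cos (pi * k * x) / (pi * k))) (at x)" for x
    unfolding G_def using k by (auto intro!: derivative_eq_intros simp: field_simps power2_eq_square)
  then have "(G has_real_derivative (sqrt 2 * sin (pi * real k * x)) * (pi / sqrt 2 * (1 - x))) (at x)" for x
    by (rule DERIV_cong) (simp add: field_simps)
  moreover have "G 1 - G 0 = 1 / real k"
  proof -
    have "sin (pi * k) = 0" by (simp add: mult.commute)
    then show ?thesis unfolding G_def using k by (simp add: field_simps)
  qed
  ultimately show ?thesis using has_integral_real_derivative[of 0 1 G] by simp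
qed

lemma has_integral_sawtooth_sq: "((\<lambda>x. (pi / sqrt 2 * (1 - x))\<^sup>2) has_integral (pi\<^sup>2 / 6)) {0..1}"
proof -
  define G where "G x = - (pi\<^sup>2 / 2) * (1 - x) ^ 3 / 3" for x :: real
  have d: "(G has_real_derivative (pi / sqrt 2 * (1 - x))\<^sup>2) (at x)" for x
  proof -
    have "(G has_real_derivative (pi\<^sup>2 / 2) * (1 - x)\<^sup>2) (at x)"
      unfolding G_def by (auto intro!: derivative_eq_intros simp: field_simps power2_eq_square)
    then show ?thesis by (simp add: power_mult_distrib power_divide)
  qed
  have "G 1 - G 0 = pi\<^sup>2 / 6" unfolding G_def by simp
  with has_integral_real_derivative[OF _ d, of 0 1] show ?thesis by simp
qed

text \<open>Expanding \<open>|S\<^sub>n - F|\<^sup>2\<close> with \<open>\<langle>e\<^sub>k, F\<rangle> = 1/k\<close> gives Bessel's identity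
  \<open>\<parallel>S\<^sub>n - F\<parallel>\<^sup>2 = \<parallel>F\<parallel>\<^sup>2 - \<Sum>\<^sub>k\<^sub>\<le>\<^sub>n k\<^sup>-\<^sup>2\<close>, and \<open>\<parallel>F\<parallel>\<^sup>2 = \<pi>\<^sup>2/6\<close>.\<close>
lemma has_integral_dist_sawtooth:
  "((\<lambda>x. (cmod (sine_partial recip_coeff n x - sawtooth x))\<^sup>2) has_integral
     (pi\<^sup>2 / 6 - (\<Sum>k\<in>{1..n}. (1 / real k)\<^sup>2))) {0..1}"
proof -
  define S where "S x = (\<Sum>k\<in>{1..n}. (1 / real k) * (sqrt 2 * sin (pi * real k * x)))" for x
  define F where "F x = pi / sqrt 2 * (1 - x)" for x :: real
  define SF where "SF x = (\<Sum>k\<in>{1..n}. (1 / real k) * ((sqrt 2 * sin (pi * real k * x)) * F x))" for x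
  have eq: "(cmod (sine_partial recip_coeff n x - sawtooth x))\<^sup>2 = (S x)\<^sup>2 - 2 * SF x + (F x)\<^sup>2" for x
  proof -
    have "sine_partial recip_coeff n x - sawtooth x = complex_of_real (S x - F x)"
      unfolding sine_partial_def recip_coeff_def S_def F_def sawtooth_def by simp
    then have "(cmod (sine_partial recip_coeff n x - sawtooth x))\<^sup>2 = (S x - F x)\<^sup>2"
      by (simp only: norm_of_real power2_abs)
    also have "\<dots> = (S x)\<^sup>2 - 2 * SF x + (F x)\<^sup>2"
      unfolding power2_diff S_def SF_def by (simp add: sum_distrib_right mult.assoc)
    finally show ?thesis .
  qed
  have "((\<lambda>x. (S x)\<^sup>2) has_integral (\<Sum>k\<in>{1..n}. (1 / real k)\<^sup>2)) {0..1}"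
    unfolding S_def by (rule has_integral_real_sine_poly_sq) auto
  moreover have "(SF has_integral (\<Sum>k\<in>{1..n}. (1 / real k) * (1 / real k))) {0..1}"
    unfolding SF_def F_def
    by (intro has_integral_sum has_integral_mult_right has_integral_sine_sawtooth) auto
  moreover have "((\<lambda>x. (F x)\<^sup>2) has_integral pi\<^sup>2 / 6) {0..1}"
    unfolding F_def by (rule has_integral_sawtooth_sq)
  ultimately have "((\<lambda>x. (S x)\<^sup>2 - 2 * SF x + (F x)\<^sup>2) has_integral
      ((\<Sum>k\<in>{1..n}. (1 / real k)\<^sup>2) - 2 * (\<Sum>k\<in>{1..n}. (1 / real k) * (1 / real k)) + pi\<^sup>2 / 6)) {0..1}"
    by (intro has_integral_add has_integral_diff has_integral_mult_right)
  then show ?thesis unfolding eq by (simp add: power2_eq_square)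
qed

lemma sawtooth_in_L2_01: "sawtooth \<in> L2_01"
proof -
  have "L2_sqnorm sawtooth = ennreal (pi\<^sup>2 / 6)"
    unfolding L2_sqnorm_def sawtooth_def
    by (rule nn_integral_01_has_integral) (simp, simp only: norm_of_real power2_abs has_integral_sawtooth_sq)
  moreover have "continuous_on UNIV sawtooth"
    unfolding sawtooth_def by (intro continuous_intros)
  ultimately show ?thesis by (simp add: L2_01_iff continuous_imp_measurable_01)
qed

lemma L2_sine_sum_recip_sawtooth: "L2_sine_sum recip_coeff sawtooth"
proof -
  have "(\<Sum>k\<in>{1..n}. (1 / real k)\<^sup>2) = (\<Sum>k<n. 1 / (1 + real k)\<^sup>2)" for n
    using sum.atLeast1_atMost_eq[of "\<lambda>k. (1 / real k)\<^sup>2" n] by (simp add: power_one_over)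
  then have "(\<lambda>n. \<Sum>k\<in>{1..n}. (1 / real k)\<^sup>2) \<longlonglongrightarrow> pi\<^sup>2 / 6"
    using inverse_squares_sums by (simp add: sums_def)
  then have "(\<lambda>n. ennreal (pi\<^sup>2 / 6 - (\<Sum>k\<in>{1..n}. (1 / real k)\<^sup>2))) \<longlonglongrightarrow> ennreal (pi\<^sup>2 / 6 - pi\<^sup>2 / 6)"
    by (intro tendsto_ennrealI tendsto_diff tendsto_const)
  moreover have "L2_dist2 (sine_partial recip_coeff n) sawtooth =
                 ennreal (pi\<^sup>2 / 6 - (\<Sum>k\<in>{1..n}. (1 / real k)\<^sup>2))" for n
    unfolding L2_dist2_def by (rule nn_integral_01_has_integral[OF _ has_integral_dist_sawtooth]) simp
  ultimately show ?thesis
    unfolding L2_sine_sum_def using sawtooth_in_L2_01 by simp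
qed


section \<open>The range of \<open>V = U P (I - S)\<close>\<close>

lemma higher_deriv_id_mult:
  assumes "g holomorphic_on ball 0 1" "1 \<le> n"
  shows "(deriv ^^ n) (\<lambda>w. w * g w) 0 = of_nat n * (deriv ^^ (n - 1)) g 0"
proof -
  have "(deriv ^^ n) (\<lambda>w. w * g w) 0 =
      (\<Sum>i = 0..n. of_nat (n choose i) * (deriv ^^ i) (\<lambda>w. w) 0 * (deriv ^^ (n-i)) g 0)"
    by (rule higher_deriv_mult) (use assms in \<open>auto intro: holomorphic_intros\<close>)
  also have "\<dots> = (\<Sum>i = 0..n. if i = 1 then of_nat n * (deriv ^^ (n - 1)) g 0 else 0)"
    by (intro sum.cong) auto
  also have "\<dots> = of_nat n * (deriv ^^ (n - 1)) g 0" using assms(2) by simp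
  finally show ?thesis .
qed

lemma taylor_coeff_proj_I_minus_shift:
  assumes g: "g holomorphic_on ball 0 1" and n: "1 \<le> n"
  shows "taylor_coeff (projP (\<lambda>z. g z - shiftS g z)) n = taylor_coeff g n - taylor_coeff g (n - 1)"
proof -
  have hol: "(\<lambda>z. z * g z) holomorphic_on ball 0 1" "(\<lambda>z. g z - z * g z) holomorphic_on ball 0 1"
    using g by (auto intro!: holomorphic_intros)
  have "projP (\<lambda>z. g z - shiftS g z) = (\<lambda>z. (g z - z * g z) - g 0)"
    unfolding projP_def shiftS_def by simp
  then have "(deriv ^^ n) (projP (\<lambda>z. g z - shiftS g z)) 0 =
        (deriv ^^ n) (\<lambda>z. g z - z * g z) 0 - (deriv ^^ n) (\<lambda>z. g 0) 0"
    using higher_deriv_diff[OF hol(2) holomorphic_on_const[of "g 0"], of 0 n] by simp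
  also have "\<dots> = (deriv ^^ n) g 0 - of_nat n * (deriv ^^ (n - 1)) g 0"
    using higher_deriv_diff[OF g hol(1), of 0 n] higher_deriv_id_mult[OF g n] n by simp
  finally have eq: "(deriv ^^ n) (projP (\<lambda>z. g z - shiftS g z)) 0 =
      (deriv ^^ n) g 0 - of_nat n * (deriv ^^ (n - 1)) g 0" .
  have "fact n = (of_nat n * fact (n - 1) :: complex)"
    using n by (cases n) (simp_all add: fact_Suc)
  then show ?thesis
    unfolding taylor_coeff_def eq using n by (simp add: field_simps)
qed

lemma L2_sine_sum_recip_not_in_range_V:
  assumes "L2_sine_sum recip_coeff f"
  shows "\<not> in_range_V f"
proof
  assume "in_range_V f"
  then obtain g where "g \<in> H2"
    and U: "L2_sine_sum (taylor_coeff (projP (\<lambda>z. g z - shiftS g z))) f"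
    unfolding in_range_V_def U_rel_def by blast
  then have hol: "g holomorphic_on ball 0 1" and sq: "summable (\<lambda>n. (cmod (taylor_coeff g n))\<^sup>2)"
    unfolding H2_def by auto
  have step: "taylor_coeff g k = taylor_coeff g (k - 1) + inverse (of_nat k)" if "1 \<le> k" for k
    using L2_sine_sum_coeff_unique[OF U assms that] taylor_coeff_proj_I_minus_shift[OF hol that]
    by (simp add: recip_coeff_def field_simps)
  have harm: "harm n = taylor_coeff g n - taylor_coeff g 0" for n
  proof (induction n)
    case (Suc n)
    then show ?case using step[of "Suc n"] by (simp add: harm_Suc)
  qed (simp add: harm_expand)
  have "(\<lambda>n. (cmod (taylor_coeff g n))\<^sup>2) \<longlonglongrightarrow> 0"
    using summable_LIMSEQ_zero[OF sq] .
  then have "(\<lambda>n. sqrt ((cmod (taylor_coeff g n))\<^sup>2)) \<longlonglongrightarrow> 0"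
    using tendsto_real_sqrt by fastforce
  then have "taylor_coeff g \<longlonglongrightarrow> 0"
    by (simp add: tendsto_norm_zero_iff)
  then have "(harm :: nat \<Rightarrow> complex) \<longlonglongrightarrow> 0 - taylor_coeff g 0"
    unfolding harm by (intro tendsto_diff tendsto_const)
  then show False
    using not_convergent_harm unfolding convergent_def by blast
qed


lemma sine_poly_periodic: "sine_poly c A (x - 2 * of_int m) = sine_poly c A x"
proof -
  have "sin (pi * real k * (x - 2 * of_int m)) = sin (pi * real k * x)" for k
  proof -
    have "pi * real k * (x - 2 * of_int m) = pi * real k * x - 2 * pi * of_int (int k * m)"
      by (simp add: algebra_simps)
    then show ?thesis by (simp only: sin_diff sin_int_2pin cos_int_2pin)
  qed
  then show ?thesis unfolding sine_poly_def by simp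
qed

lemma sine_poly_minus: "sine_poly c A (- x) = - sine_poly c A x"
  unfolding sine_poly_def by (simp add: sum_negf)

lemma odd_ext_sine_poly: "odd_ext (sine_poly c A) x = sine_poly c A x"
  unfolding odd_ext_def Let_def
  using sine_poly_periodic[of c A x] sine_poly_minus[of c A "x - 2 * of_int \<lfloor>(x + 1) / 2\<rfloor>"]
  by auto

lemma odd_ext_diff: "odd_ext (\<lambda>y. f y - g y) x = odd_ext f x - odd_ext g x"
  unfolding odd_ext_def Let_def by auto

lemma odd_ext_cong:
  assumes "\<And>y. 0 \<le> y \<Longrightarrow> y \<le> 1 \<Longrightarrow> f y = g y"
  shows "odd_ext f x = odd_ext g x"
proof -
  define y where "y = x - 2 * of_int \<lfloor>(x + 1) / 2\<rfloor>"
  have "-1 \<le> y" "y < 1"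
    using of_int_floor_le[of "(x + 1) / 2"] real_of_int_floor_add_one_gt[of "(x + 1) / 2"]
    unfolding y_def by (simp_all add: field_simps)
  then show ?thesis unfolding odd_ext_def Let_def y_def[symmetric] using assms by auto
qed

lemma odd_ext_on_interval:
  fixes j :: int
  assumes "of_int j < y" "y < of_int j + 1"
  shows "odd_ext g y = (if even j then g (y - of_int j) else - g (of_int j + 1 - y))"
proof (cases "even j")
  case True
  then obtain q where q: "j = 2 * q" by (auto elim: evenE)
  then have "\<lfloor>(y + 1) / 2\<rfloor> = q" by (intro floor_unique) (use assms in auto)
  then show ?thesis using True q assms unfolding odd_ext_def Let_def by auto
next
  case False
  then obtain q where q: "j = 2 * q + 1" by (auto elim: oddE)
  then have "\<lfloor>(y + 1) / 2\<rfloor> = q + 1" by (intro floor_unique) (use assms in auto)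
  then show ?thesis using False q assms unfolding odd_ext_def Let_def by (auto simp: algebra_simps)
qed

lemma odd_ext_measurable:
  assumes g: "g \<in> borel_measurable lborel_01"
  shows "odd_ext g \<in> borel_measurable borel"
proof -
  define g' where "g' y = indicator {0<..<1} y *\<^sub>R g y + indicator {0} y *\<^sub>R g 0 + indicator {1} y *\<^sub>R g 1"
    for y :: real
  have [measurable]: "(\<lambda>y. indicator {0<..<1::real} y *\<^sub>R g y) \<in> borel_measurable borel"
    using g by (subst (asm) borel_measurable_restrict_space_iff) auto
  have [measurable]: "g' \<in> borel_measurable borel" unfolding g'_def by measurable
  have "odd_ext g = odd_ext g'"
    by (intro ext odd_ext_cong) (auto simp: g'_def indicator_def)
  moreover have "odd_ext g' \<in> borel_measurable borel" unfolding odd_ext_def Let_def by measurable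
  ultimately show ?thesis by simp
qed

lemma odd_ext_dilate_measurable:
  assumes "g \<in> borel_measurable lborel_01"
  shows "(\<lambda>x. odd_ext g (real k * x)) \<in> borel_measurable lborel_01"
proof -
  have [measurable]: "odd_ext g \<in> borel_measurable borel" by (rule odd_ext_measurable[OF assms])
  show ?thesis by (intro measurable_restrict_space1) measurable
qed

lemma sum_unit_intervals_non_int:
  fixes y :: real and a :: "'a::comm_monoid_add"
  assumes "\<And>j::int. y \<noteq> of_int j"
  shows "(\<Sum>i<k. if real i < y \<and> y < real i + 1 then a else 0) = (if 0 < y \<and> y < real k then a else 0)"
proof -
  define j where "j = \<lfloor>y\<rfloor>"
  have iff: "(real i < y \<and> y < real i + 1) \<longleftrightarrow> j = int i" for i
    using assms[of "int i"] unfolding j_def floor_eq_iff by auto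
  have range: "(0 \<le> j \<and> nat j < k) \<longleftrightarrow> 0 < y \<and> y < real k"
  proof -
    have "y \<noteq> 0" using assms[of 0] by simp
    then show ?thesis unfolding j_def by (auto simp: floor_less_iff nat_less_iff)
  qed
  show ?thesis
  proof (cases "0 \<le> j \<and> nat j < k")
    case True
    then have "(\<Sum>i<k. if real i < y \<and> y < real i + 1 then a else 0) = (\<Sum>i<k. if i = nat j then a else 0)"
      unfolding iff by (intro sum.cong refl) auto
    then show ?thesis using True range by simp
  next
    case False
    then have "(\<Sum>i<k. if real i < y \<and> y < real i + 1 then a else 0) = (\<Sum>i<k. 0)"
      unfolding iff by (intro sum.cong refl) auto
    with False range show ?thesis by auto
  qed
qed

text \<open>On \<open>(i/k, (i+1)/k)\<close> the function \<open>x \<mapsto> odd_ext g (k x)\<close> is \<open>\<plusminus>g\<close> composed with an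
  affine bijection onto \<open>(0,1)\<close> of slope \<open>\<plusminus>k\<close>; the \<open>k\<close> pieces have total squared norm
  \<open>k \<cdot> (1/k) \<parallel>g\<parallel>\<^sup>2\<close>.\<close>
lemma L2_sqnorm_odd_ext_dilate:
  assumes g: "g \<in> borel_measurable lborel_01" and k: "1 \<le> k"
  shows "L2_sqnorm (\<lambda>x. odd_ext g (real k * x)) = L2_sqnorm g"
proof -
  define W where "W y = ennreal ((cmod (g y))\<^sup>2) * indicator {0<..<1} y" for y :: real
  have "(\<lambda>y. ennreal ((cmod (g y))\<^sup>2)) \<in> borel_measurable lborel_01"
    using g by measurable
  then have [measurable]: "W \<in> borel_measurable borel"
    unfolding W_def by (subst (asm) borel_measurable_restrict_space_iff_ennreal) auto
  define piece where
    "piece i x = W (if even i then real k * x - real i else real i + 1 - real k * x)" for i x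
  have kpos: "real k > 0" using k by simp
  have piece_eq: "piece i x = (if real i < real k * x \<and> real k * x < real i + 1
                    then ennreal ((cmod (odd_ext g (real k * x)))\<^sup>2) else 0)" for i x
    using odd_ext_on_interval[of "int i" "real k * x" g] unfolding piece_def W_def
    by (auto simp: indicator_def)
  have "AE x in lborel. x \<notin> range (\<lambda>j::int. of_int j / real k)"
    by (intro AE_not_in countable_imp_null_set_lborel) simp
  then have ae: "AE x in lborel. ennreal ((cmod (odd_ext g (real k * x)))\<^sup>2) * indicator {0<..<1} x =
                               (\<Sum>i<k. piece i x)"
  proof (rule AE_mp, intro AE_I2 impI)
    fix x assume "x \<notin> range (\<lambda>j::int. of_int j / real k)"
    then have non_int: "real k * x \<noteq> of_int j" for j
      using kpos by (auto simp: field_simps image_iff)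
    have "0 < real k * x \<and> real k * x < real k \<longleftrightarrow> x \<in> {0<..<1}"
      using kpos mult_less_cancel_left_pos[of "real k" x 1] by (auto simp: zero_less_mult_iff)
    then show "ennreal ((cmod (odd_ext g (real k * x)))\<^sup>2) * indicator {0<..<1} x = (\<Sum>i<k. piece i x)"
      unfolding piece_eq sum_unit_intervals_non_int[OF non_int] by (simp add: indicator_def)
  qed
  have int_piece: "ennreal (real k) * (\<integral>\<^sup>+x. piece i x \<partial>lborel) = (\<integral>\<^sup>+x. W x \<partial>lborel)" for i
  proof (cases "even i")
    case True
    have "(\<integral>\<^sup>+x. W x \<partial>lborel) = ennreal \<bar>real k\<bar> * (\<integral>\<^sup>+x. W (- real i + real k * x) \<partial>lborel)"
      by (rule nn_integral_real_affine) (use kpos in auto)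
    then show ?thesis unfolding piece_def using True by (simp add: algebra_simps)
  next
    case False
    have "(\<integral>\<^sup>+x. W x \<partial>lborel) = ennreal \<bar>- real k\<bar> * (\<integral>\<^sup>+x. W ((real i + 1) + (- real k) * x) \<partial>lborel)"
      by (rule nn_integral_real_affine) (use kpos in auto)
    then show ?thesis unfolding piece_def using False by (simp add: algebra_simps)
  qed
  then have "(\<integral>\<^sup>+x. piece i x \<partial>lborel) = (\<integral>\<^sup>+x. piece 0 x \<partial>lborel)" for i
    using kpos by (metis ennreal_mult_cancel_left ennreal_eq_0_iff ennreal_neq_top not_le)
  then have "L2_sqnorm (\<lambda>x. odd_ext g (real k * x)) = (\<Sum>i<k. \<integral>\<^sup>+x. piece 0 x \<partial>lborel)"
    unfolding L2_sqnorm_def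
    by (simp add: nn_integral_cong_AE[OF ae] nn_integral_sum piece_def)
  also have "\<dots> = L2_sqnorm g"
    using int_piece[of 0] by (simp add: L2_sqnorm_def W_def ennreal_of_nat_eq_real_of_nat)
  finally show ?thesis .
qed

definition dilate :: "nat \<Rightarrow> (nat \<Rightarrow> 'a::zero) \<Rightarrow> nat \<Rightarrow> 'a" where
  "dilate k b t = (if k dvd t then b (t div k) else 0)"

lemma sum_dilate:
  fixes f :: "nat \<Rightarrow> 'a::comm_monoid_add"
  assumes "1 \<le> k"
  shows "(\<Sum>t\<in>{1..n}. dilate k f t) = (\<Sum>s\<in>{1..n div k}. f s)"
proof -
  have "(\<Sum>t\<in>{1..n}. dilate k f t) = (\<Sum>t\<in>{t\<in>{1..n}. k dvd t}. f (t div k))"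
    unfolding dilate_def by (rule sum.inter_filter[symmetric]) simp
  also have "{t\<in>{1..n}. k dvd t} = (\<lambda>s. k * s) ` {1..n div k}"
    using assms by (auto simp: image_iff less_eq_div_iff_mult_less_eq mult.commute elim!: dvdE)
  also have "(\<Sum>t\<in>(\<lambda>s. k * s) ` {1..n div k}. f (t div k)) = (\<Sum>s\<in>{1..n div k}. f s)"
    using assms by (subst sum.reindex) (auto simp: inj_on_def)
  finally show ?thesis .
qed

lemma sine_partial_dilate:
  assumes "1 \<le> k"
  shows "sine_partial (dilate k b) n x = sine_partial b (n div k) (real k * x)"
proof -
  define e where "e t = complex_of_real (sqrt 2 * sin (pi * real t * x))" for t
  have "sine_partial (dilate k b) n x = (\<Sum>t\<in>{1..n}. dilate k (\<lambda>s. b s * e (k * s)) t)"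
    unfolding sine_partial_def e_def by (intro sum.cong) (auto simp: dilate_def)
  also have "\<dots> = sine_partial b (n div k) (real k * x)"
    unfolding sum_dilate[OF assms] sine_partial_def e_def by (simp add: mult_ac)
  finally show ?thesis .
qed

lemma L2_sine_sum_dilate:
  assumes F: "L2_sine_sum b F" and k: "1 \<le> k"
  shows "L2_sine_sum (dilate k b) (\<lambda>x. odd_ext F (real k * x))"
proof -
  note FF = L2_sine_sumD[OF F]
  have "L2_dist2 (sine_partial (dilate k b) n) (\<lambda>x. odd_ext F (real k * x)) =
        L2_dist2 (sine_partial b (n div k)) F" for n
  proof -
    have "L2_dist2 (sine_partial (dilate k b) n) (\<lambda>x. odd_ext F (real k * x)) =
          L2_sqnorm (\<lambda>x. odd_ext (\<lambda>y. sine_partial b (n div k) y - F y) (real k * x))"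
      unfolding L2_dist2_eq_sqnorm sine_partial_dilate[OF k] odd_ext_diff
      by (simp add: sine_partial_eq_sine_poly odd_ext_sine_poly)
    also have "\<dots> = L2_dist2 (sine_partial b (n div k)) F"
      unfolding L2_dist2_eq_sqnorm
      by (rule L2_sqnorm_odd_ext_dilate[OF _ k]) (use FF(2) sine_partial_measurable in auto)
    finally show ?thesis .
  qed
  moreover have "(\<lambda>n. L2_dist2 (sine_partial b (n div k)) F) \<longlonglongrightarrow> 0"
    by (rule filterlim_compose[OF FF(4) filterlim_at_top_div_const_nat]) (use k in simp)
  moreover have "(\<lambda>x. odd_ext F (real k * x)) \<in> L2_01"
    unfolding L2_01_iff
    using odd_ext_dilate_measurable[OF FF(2)] L2_sqnorm_odd_ext_dilate[OF FF(2) k] FF(3) by simp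
  ultimately show ?thesis unfolding L2_sine_sum_def by simp
qed


section \<open>Dirichlet convolution with \<open>1/k\<close>\<close>

text \<open>The Dirichlet convolution \<open>c \<star> (1/k)\<close>, written as \<open>\<Sum>\<^sub>n\<^sub>|\<^sub>t c\<^sub>n n / t\<close>: by
  \<open>L2_sine_sum_dilate\<close> it is the coefficient sequence of \<open>\<Sum>\<^sub>n c\<^sub>n f\<^sub>1(n x)\<close>.\<close>
definition conv_recip :: "(nat \<Rightarrow> complex) \<Rightarrow> nat \<Rightarrow> complex" where
  "conv_recip c t = (\<Sum>n\<in>{1..t}. if n dvd t then c n * of_nat n / of_nat t else 0)"

lemma conv_recip_add_cmult: "conv_recip (\<lambda>n. c n + a * d n) t = conv_recip c t + a * conv_recip d t"
  unfolding conv_recip_def sum_distrib_left sum.distrib[symmetric]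
  by (intro sum.cong) (auto simp: algebra_simps add_divide_distrib)

lemma conv_recip_cmult: "conv_recip (\<lambda>n. a * d n) t = a * conv_recip d t"
  unfolding conv_recip_def sum_distrib_left by (intro sum.cong) auto

lemma conv_recip_sum: "conv_recip (\<lambda>n. \<Sum>k\<in>K. f k n) t = (\<Sum>k\<in>K. conv_recip (f k) t)"
  unfolding conv_recip_def
  by (subst sum.swap) (auto simp: sum_distrib_right sum_divide_distrib intro!: sum.cong)

lemma conv_recip_dilate:
  assumes p: "1 \<le> p"
  shows "conv_recip (dilate p c) t = dilate p (conv_recip c) t"
proof (cases "p dvd t")
  case False
  then show ?thesis
    unfolding conv_recip_def by (auto simp: dilate_def intro!: sum.neutral intro: dvd_trans)
next
  case True
  then obtain m where m: "t = p * m" by (auto elim: dvdE)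
  have "conv_recip (dilate p c) t =
        (\<Sum>n\<in>{1..t}. dilate p (\<lambda>s. if s dvd m then c s * of_nat s / of_nat m else 0) n)"
    unfolding conv_recip_def
  proof (intro sum.cong refl)
    fix n
    show "(if n dvd t then dilate p c n * of_nat n / of_nat t else 0) =
          dilate p (\<lambda>s. if s dvd m then c s * of_nat s / of_nat m else 0) n"
    proof (cases "p dvd n")
      case True
      then obtain s where s: "n = p * s" by (auto elim: dvdE)
      have "n dvd t \<longleftrightarrow> s dvd m" using s m p by auto
      moreover have "c s * of_nat n / of_nat t = c s * of_nat s / of_nat m"
        using s m p by (cases "m = 0") (auto simp: field_simps)
      ultimately show ?thesis using s p by (auto simp: dilate_def)
    qed (auto simp: dilate_def)
  qed
  also have "\<dots> = conv_recip c m"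
    unfolding sum_dilate[OF p] conv_recip_def using m p by simp
  also have "\<dots> = dilate p (conv_recip c) t" using True m p by (simp add: dilate_def)
  finally show ?thesis .
qed

lemma dilate_eq_0:
  assumes "\<And>n. n \<notin> {1..N} \<Longrightarrow> c n = 0" "1 \<le> p" "n \<notin> {1..p * N}"
  shows "dilate p c n = 0"
  using assms by (auto simp: dilate_def elim!: dvdE)

lemma prime_dvd_div_iff:
  fixes p q t :: nat
  assumes "prime p" "prime q" "p \<noteq> q" "p dvd t"
  shows "q dvd t div p \<longleftrightarrow> q dvd t"
proof
  assume "q dvd t"
  then have "q dvd p * (t div p)" using assms(4) by simp
  moreover have "\<not> q dvd p" using assms primes_dvd_imp_eq by blast
  ultimately show "q dvd t div p" using assms(2) prime_dvd_mult_iff by blast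
next
  assume "q dvd t div p"
  then have "q dvd t div p * p" by (rule dvd_mult2)
  then show "q dvd t" using assms(4) by simp
qed

lemma conv_recip_sieve_step:
  assumes conv: "\<forall>t. conv_recip c t = (if \<forall>q\<in>Q. \<not> q dvd t then 1 / of_nat t else 0)"
    and p: "prime p" "p \<notin> Q" and Q: "\<forall>q\<in>Q. prime q"
  shows "conv_recip (\<lambda>n. c n + (- 1 / of_nat p) * dilate p c n) t =
           (if \<forall>q\<in>insert p Q. \<not> q dvd t then 1 / of_nat t else 0)"
proof -
  have p1: "1 \<le> p" using p prime_ge_1_nat by blast
  have eq: "conv_recip (\<lambda>n. c n + (- 1 / of_nat p) * dilate p c n) t =
            conv_recip c t + (- 1 / of_nat p) * dilate p (conv_recip c) t"
    unfolding conv_recip_add_cmult conv_recip_dilate[OF p1] ..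
  show ?thesis
  proof (cases "p dvd t \<and> t \<noteq> 0")
    case True
    have "q dvd t div p \<longleftrightarrow> q dvd t" if "q \<in> Q" for q
      using that p Q prime_dvd_div_iff[OF p(1) _ _ conjunct1[OF True], of q] by auto
    then have "(\<forall>q\<in>Q. \<not> q dvd t div p) \<longleftrightarrow> (\<forall>q\<in>Q. \<not> q dvd t)"
      by auto
    moreover have "of_nat t = (of_nat p * of_nat (t div p) :: complex)" "t div p \<noteq> 0"
      using True by (auto simp flip: of_nat_mult)
    ultimately have "conv_recip c t + (- 1 / of_nat p) * dilate p (conv_recip c) t = 0"
      using conv True p1 by (auto simp: dilate_def field_simps)
    then show ?thesis unfolding eq using True by auto
  next
    case False
    then consider "\<not> p dvd t" | "t = 0" by blast
    then show ?thesis unfolding eq using conv by cases (simp_all add: dilate_def)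
  qed
qed

text \<open>Sieving \<open>\<delta>\<^sub>1\<close> by the primes of \<open>Q\<close>: the finitely supported sequence
  \<open>c = \<Prod>\<^sub>q\<^sub>\<in>\<^sub>Q (\<delta>\<^sub>1 - \<delta>\<^sub>q / q)\<close> (Dirichlet product) has \<open>c \<star> (1/k)\<close> equal to \<open>1/t\<close> on the
  \<open>t\<close> free of prime factors in \<open>Q\<close>, and \<open>0\<close> elsewhere.\<close>
lemma conv_recip_sieve:
  assumes "finite Q" "\<forall>q\<in>Q. prime q"
  shows "\<exists>N c. (\<forall>n. n \<notin> {1..N} \<longrightarrow> c n = 0) \<and>
                 (\<forall>t. conv_recip c t = (if \<forall>q\<in>Q. \<not> q dvd t then 1 / of_nat t else 0))"
  using assms
proof (induction Q rule: finite_induct)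
  case empty
  define c :: "nat \<Rightarrow> complex" where "c n = (if n = 1 then 1 else 0)" for n
  have "conv_recip c t = 1 / of_nat t" for t
  proof (cases "t = 0")
    case False
    have "conv_recip c t = (\<Sum>n\<in>{1..t}. if n = 1 then 1 / of_nat t else 0)"
      unfolding conv_recip_def c_def by (intro sum.cong) auto
    also have "\<dots> = 1 / of_nat t" using False by (subst sum.delta) auto
    finally show ?thesis .
  qed (simp add: conv_recip_def)
  moreover have "\<forall>n. n \<notin> {1..1} \<longrightarrow> c n = 0" by (auto simp: c_def)
  ultimately show ?case by (intro exI[of _ 1] exI[of _ c]) auto
next
  case (insert p Q)
  then obtain N c where supp: "\<forall>n. n \<notin> {1..N} \<longrightarrow> c n = 0"
      and conv: "\<forall>t. conv_recip c t = (if \<forall>q\<in>Q. \<not> q dvd t then 1 / of_nat t else 0)" by auto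
  have p: "prime p" using insert by auto
  then have p1: "1 \<le> p" using prime_ge_1_nat by blast
  define c' where "c' n = c n + (- 1 / of_nat p) * dilate p c n" for n
  have supp': "\<forall>n. n \<notin> {1..p * N} \<longrightarrow> c' n = 0"
  proof (intro allI impI)
    fix n assume n: "n \<notin> {1..p * N}"
    moreover have "N \<le> p * N" using p1 by simp
    ultimately have "n \<notin> {1..N}" by (meson atLeastAtMost_iff order.trans)
    then show "c' n = 0" unfolding c'_def using supp dilate_eq_0[of N c p] p1 n by auto
  qed
  have "\<forall>t. conv_recip c' t = (if \<forall>q\<in>insert p Q. \<not> q dvd t then 1 / of_nat t else 0)"
    unfolding c'_def using conv_recip_sieve_step[OF conv p] insert by auto
  with supp' show ?case by blast
qed

lemma sum_inverse_squares_tail_le: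
  assumes "1 \<le> P"
  shows "(\<Sum>s\<in>{1..m}. if P < s then 1 / (real s)\<^sup>2 else 0) \<le> 1 / real P - 1 / real (max m P)"
proof (induction m)
  case (Suc m)
  show ?case
  proof (cases "Suc m \<le> P")
    case True
    then have "(\<Sum>s\<in>{1..Suc m}. if P < s then 1 / (real s)\<^sup>2 else 0) = 0"
      by (intro sum.neutral) auto
    then show ?thesis using True by (simp add: max_def)
  next
    case False
    then have m: "P \<le> m" "real m \<ge> 1" using assms by auto
    have "1 / (real (Suc m))\<^sup>2 \<le> 1 / (real m * real (Suc m))"
      using m by (intro divide_left_mono) (auto simp: power2_eq_square)
    also have "\<dots> = 1 / real m - 1 / real (Suc m)"
      using m by (simp add: field_simps)
    finally show ?thesis using Suc False m by (simp add: max_def)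
  qed
qed (use assms in simp)

text \<open>With \<open>Q\<close> the primes up to \<open>P\<close>, every \<open>t > 1\<close> on which the sieve survives exceeds \<open>P\<close>.\<close>
lemma conv_recip_sieve_tail:
  "\<exists>N c. (\<forall>n. n \<notin> {1..N} \<longrightarrow> c n = 0) \<and>
         (\<forall>t. (cmod (conv_recip c t - (if t = 1 then 1 else 0)))\<^sup>2 \<le> (if P < t then 1 / (real t)\<^sup>2 else 0))"
proof -
  define Q where "Q = {q::nat. prime q \<and> q \<le> P}"
  have "finite Q" "\<forall>q\<in>Q. prime q" unfolding Q_def by (auto intro: finite_subset[of _ "{..P}"])
  then obtain N c where supp: "\<forall>n. n \<notin> {1..N} \<longrightarrow> c n = 0"
    and conv: "\<forall>t. conv_recip c t = (if \<forall>q\<in>Q. \<not> q dvd t then 1 / of_nat t else 0)"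
    using conv_recip_sieve by blast
  have "(cmod (conv_recip c t - (if t = 1 then 1 else 0)))\<^sup>2 \<le> (if P < t then 1 / (real t)\<^sup>2 else 0)" for t
  proof (cases "t \<le> 1")
    case True
    then have "t = 0 \<or> t = 1" by auto
    moreover have "\<forall>q\<in>Q. \<not> q dvd 1" unfolding Q_def by auto
    ultimately show ?thesis using conv by auto
  next
    case t: False
    show ?thesis
    proof (cases "\<forall>q\<in>Q. \<not> q dvd t")
      case True
      obtain q where q: "prime q" "q dvd t" using prime_factor_nat[of t] t by auto
      then have "q \<notin> Q" "q \<le> t" using True t by (auto intro: dvd_imp_le)
      then have "P < t" using q unfolding Q_def by auto
      then show ?thesis using True t conv by (simp add: norm_divide power_one_over)
    qed (use conv t in auto)
  qed
  then show ?thesis by (intro exI[of _ N] exI[of _ c]) (use supp in blast)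
qed

lemma sum_sq_sum_dilates_le:
  fixes \<beta> E :: "nat \<Rightarrow> complex"
  assumes E: "\<And>s. (cmod (E s))\<^sup>2 \<le> (if P < s then 1 / (real s)\<^sup>2 else 0)" and P: "1 \<le> P"
  shows "(\<Sum>t\<in>{1..n}. (cmod (\<Sum>k\<in>{1..K}. \<beta> k * dilate k E t))\<^sup>2) \<le>
           (\<Sum>k\<in>{1..K}. (cmod (\<beta> k))\<^sup>2) * K / P"
proof -
  define S where "S = (\<Sum>k\<in>{1..K}. (cmod (\<beta> k))\<^sup>2)"
  have "(\<Sum>t\<in>{1..n}. (cmod (\<Sum>k\<in>{1..K}. \<beta> k * dilate k E t))\<^sup>2) \<le>
          (\<Sum>t\<in>{1..n}. S * (\<Sum>k\<in>{1..K}. dilate k (\<lambda>s. (cmod (E s))\<^sup>2) t))"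
  proof (rule sum_mono)
    fix t
    have "(cmod (\<Sum>k\<in>{1..K}. \<beta> k * dilate k E t))\<^sup>2 \<le> (\<Sum>k\<in>{1..K}. cmod (\<beta> k) * cmod (dilate k E t))\<^sup>2"
      by (intro power_mono order.trans[OF norm_sum]) (auto simp: norm_mult)
    also have "\<dots> \<le> S * (\<Sum>k\<in>{1..K}. (cmod (dilate k E t))\<^sup>2)"
      unfolding S_def by (rule Cauchy_Schwarz_ineq_sum)
    also have "(\<Sum>k\<in>{1..K}. (cmod (dilate k E t))\<^sup>2) = (\<Sum>k\<in>{1..K}. dilate k (\<lambda>s. (cmod (E s))\<^sup>2) t)"
      by (intro sum.cong) (auto simp: dilate_def)
    finally show "(cmod (\<Sum>k\<in>{1..K}. \<beta> k * dilate k E t))\<^sup>2 \<le>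
                  S * (\<Sum>k\<in>{1..K}. dilate k (\<lambda>s. (cmod (E s))\<^sup>2) t)" .
  qed
  also have "\<dots> = S * (\<Sum>k\<in>{1..K}. \<Sum>t\<in>{1..n}. dilate k (\<lambda>s. (cmod (E s))\<^sup>2) t)"
    by (simp only: sum_distrib_left[symmetric] sum.swap[of _ "{1..n}"])
  also have "\<dots> = S * (\<Sum>k\<in>{1..K}. \<Sum>s\<in>{1..n div k}. (cmod (E s))\<^sup>2)"
    by (intro arg_cong[where f="\<lambda>x. S * x"] sum.cong refl sum_dilate) auto
  also have "\<dots> \<le> S * (\<Sum>k\<in>{1..K}. 1 / real P)"
  proof (intro mult_left_mono sum_mono)
    fix k
    have "(\<Sum>s\<in>{1..n div k}. (cmod (E s))\<^sup>2) \<le> (\<Sum>s\<in>{1..n div k}. if P < s then 1 / (real s)\<^sup>2 else 0)"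
      by (intro sum_mono E)
    also have "\<dots> \<le> 1 / real P"
      by (rule order_trans[OF sum_inverse_squares_tail_le[OF P]]) simp
    finally show "(\<Sum>s\<in>{1..n div k}. (cmod (E s))\<^sup>2) \<le> 1 / real P" .
  qed (simp add: S_def sum_nonneg)
  finally show ?thesis by (simp add: S_def)
qed

lemma conv_recip_sum_dilates_sub:
  "conv_recip (\<lambda>n. \<Sum>k\<in>{1..K}. \<beta> k * dilate k c n) t - (if t \<in> {1..K} then \<beta> t else 0) =
   (\<Sum>k\<in>{1..K}. \<beta> k * dilate k (\<lambda>s. conv_recip c s - (if s = 1 then 1 else 0)) t)"
proof -
  have "(\<Sum>k\<in>{1..K}. \<beta> k * dilate k (\<lambda>s. if s = 1 then 1 else 0) t) = (\<Sum>k\<in>{1..K}. if t = k then \<beta> k else 0)"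
    by (intro sum.cong) (auto simp: dilate_def elim!: dvdE)
  then have "(if t \<in> {1..K} then \<beta> t else 0) = (\<Sum>k\<in>{1..K}. \<beta> k * dilate k (\<lambda>s. if s = 1 then 1 else 0) t)"
    by (simp add: sum.delta)
  moreover have "conv_recip (\<lambda>n. \<Sum>k\<in>{1..K}. \<beta> k * dilate k c n) t = (\<Sum>k\<in>{1..K}. \<beta> k * dilate k (conv_recip c) t)"
    unfolding conv_recip_sum conv_recip_cmult by (intro sum.cong) (auto simp: conv_recip_dilate)
  ultimately have "conv_recip (\<lambda>n. \<Sum>k\<in>{1..K}. \<beta> k * dilate k c n) t - (if t \<in> {1..K} then \<beta> t else 0) =
      (\<Sum>k\<in>{1..K}. \<beta> k * dilate k (conv_recip c) t - \<beta> k * dilate k (\<lambda>s. if s = 1 then 1 else 0) t)"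
    by (simp only: sum_subtractf)
  also have "\<dots> = (\<Sum>k\<in>{1..K}. \<beta> k * dilate k (\<lambda>s. conv_recip c s - (if s = 1 then 1 else 0)) t)"
    by (intro sum.cong refl) (simp add: dilate_def right_diff_distrib)
  finally show ?thesis .
qed

text \<open>Dilating the sieve by each \<open>k \<le> K\<close> reproduces \<open>\<beta>\<close> up to the dilated tails, whose squared
  \<open>\<ell>\<^sup>2\<close>-norm is \<open>O(K/P)\<close> by Cauchy-Schwarz.\<close>
lemma conv_recip_approx:
  assumes eps: "0 < \<epsilon>"
  shows "\<exists>N c. (\<forall>n. n \<notin> {1..N} \<longrightarrow> c n = 0) \<and>
     (\<forall>n. (\<Sum>t\<in>{1..n}. (cmod (conv_recip c t - (if t \<in> {1..K} then \<beta> t else 0)))\<^sup>2) \<le> \<epsilon>)"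
proof -
  define S where "S = (\<Sum>k\<in>{1..K}. (cmod (\<beta> k))\<^sup>2)"
  define P :: nat where "P = nat \<lceil>S * K / \<epsilon>\<rceil> + 1"
  have P1: "1 \<le> P" unfolding P_def by simp
  have "S * K / \<epsilon> \<le> real P" unfolding P_def by linarith
  then have PS: "S * K / P \<le> \<epsilon>" using eps P1 by (simp add: field_simps)
  obtain N0 c0 where supp0: "\<forall>n. n \<notin> {1..N0} \<longrightarrow> c0 n = 0"
    and tail: "\<And>t. (cmod (conv_recip c0 t - (if t = 1 then 1 else 0)))\<^sup>2 \<le> (if P < t then 1 / (real t)\<^sup>2 else 0)"
    using conv_recip_sieve_tail[of P] by blast
  define c where "c n = (\<Sum>k\<in>{1..K}. \<beta> k * dilate k c0 n)" for n
  have supp: "\<forall>n. n \<notin> {1..K * N0} \<longrightarrow> c n = 0"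
  proof (intro allI impI)
    fix n assume n: "n \<notin> {1..K * N0}"
    have "dilate k c0 n = 0" if k: "k \<in> {1..K}" for k
    proof (rule dilate_eq_0)
      from k have "k * N0 \<le> K * N0" by simp
      with n show "n \<notin> {1..k * N0}" by (meson atLeastAtMost_iff order.trans)
    qed (use supp0 k in auto)
    then show "c n = 0" unfolding c_def by simp
  qed
  have "(\<Sum>t\<in>{1..n}. (cmod (conv_recip c t - (if t \<in> {1..K} then \<beta> t else 0)))\<^sup>2) \<le> \<epsilon>" for n
    unfolding c_def conv_recip_sum_dilates_sub
    using sum_sq_sum_dilates_le[OF tail P1, where n=n and K=K and \<beta>=\<beta>] PS unfolding S_def by linarith
  with supp show ?thesis by (intro exI[of _ "K * N0"] exI[of _ c]) blast
qed

lemma L2_sine_sum_sum_dilates: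
  assumes "L2_sine_sum b f"
  shows "L2_sine_sum (\<lambda>t. \<Sum>n\<in>{1..N}. c n * dilate n b t) (\<lambda>x. \<Sum>n\<in>{1..N}. c n * odd_ext f (real n * x))"
proof (induction N)
  case 0
  have "sine_poly (\<lambda>_. 0) {1..0} = (\<lambda>x. 0)" by (simp add: sine_poly_def fun_eq_iff)
  then show ?case using L2_sine_sum_sine_poly[of 0 "\<lambda>_. 0"] by simp
next
  case (Suc N)
  from L2_sine_sum_add_cmult[OF Suc L2_sine_sum_dilate[OF assms], of "Suc N" "c (Suc N)"]
  show ?case by simp
qed

lemma sum_dilates_recip_eq_conv_recip:
  assumes "\<And>n. n \<notin> {1..N} \<Longrightarrow> c n = 0"
  shows "(\<Sum>n\<in>{1..N}. c n * dilate n recip_coeff t) = conv_recip c t"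
proof (cases "t = 0")
  case False
  have "(\<Sum>n\<in>{1..N}. c n * dilate n recip_coeff t) =
        (\<Sum>n\<in>{1..N+t}. if n dvd t then c n * of_nat n / of_nat t else 0)"
  proof (rule sum.mono_neutral_cong_left)
    fix n assume "n \<in> {1..N}"
    show "c n * dilate n recip_coeff t = (if n dvd t then c n * of_nat n / of_nat t else 0)"
      using False by (auto simp: dilate_def recip_coeff_def elim!: dvdE)
  qed (use assms in auto)
  also have "\<dots> = conv_recip c t" unfolding conv_recip_def
    by (rule sum.mono_neutral_right) (use False in \<open>auto dest: dvd_imp_le\<close>)
  finally show ?thesis .
qed (simp add: dilate_def recip_coeff_def conv_recip_def)


lemma L2_sine_sum_conv_recip:
  assumes "L2_sine_sum recip_coeff f" "\<And>n. n \<notin> {1..N} \<Longrightarrow> c n = 0"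
  shows "L2_sine_sum (conv_recip c) (\<lambda>x. \<Sum>n\<in>{1..N}. c n * odd_ext f (real n * x))"
proof -
  have "(\<lambda>t. \<Sum>n\<in>{1..N}. c n * dilate n recip_coeff t) = conv_recip c"
    using sum_dilates_recip_eq_conv_recip[of N c] assms(2) by auto
  with L2_sine_sum_sum_dilates[OF assms(1), where N=N and c=c] show ?thesis by simp
qed


section \<open>Density of finite sine polynomials in \<open>L\<^sup>2(0,1)\<close>\<close>

definition is_sine_poly :: "(real \<Rightarrow> complex) \<Rightarrow> bool" where
  "is_sine_poly f \<longleftrightarrow> (\<exists>K \<beta>. \<forall>x. f x = sine_poly \<beta> {1..K} x)"

lemma sine_poly_pad:
  assumes "K \<le> L"
  shows "sine_poly \<beta> {1..K} x = sine_poly (\<lambda>k. if k \<le> K then \<beta> k else 0) {1..L} x"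
  unfolding sine_poly_def using assms by (intro sum.mono_neutral_cong_left) auto

lemma is_sine_poly_add:
  assumes "is_sine_poly f" "is_sine_poly g"
  shows "is_sine_poly (\<lambda>x. f x + g x)"
proof -
  obtain K1 b1 where 1: "\<forall>x. f x = sine_poly b1 {1..K1} x" using assms(1) unfolding is_sine_poly_def by auto
  obtain K2 b2 where 2: "\<forall>x. g x = sine_poly b2 {1..K2} x" using assms(2) unfolding is_sine_poly_def by auto
  define b where "b k = (if k \<le> K1 then b1 k else 0) + (if k \<le> K2 then b2 k else 0)" for k
  have "f x + g x = sine_poly b {1..K1+K2} x" for x
    using 1 2 sine_poly_pad[of K1 "K1+K2" b1 x] sine_poly_pad[of K2 "K1+K2" b2 x]
    unfolding b_def sine_poly_def by (simp add: sum.distrib algebra_simps)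
  then show ?thesis unfolding is_sine_poly_def by blast
qed

lemma is_sine_poly_cmult:
  assumes "is_sine_poly f"
  shows "is_sine_poly (\<lambda>x. c * f x)"
proof -
  obtain K b where 1: "\<forall>x. f x = sine_poly b {1..K} x" using assms(1) unfolding is_sine_poly_def by auto
  have "c * f x = sine_poly (\<lambda>k. c * b k) {1..K} x" for x
    using 1 unfolding sine_poly_def by (simp add: sum_distrib_left mult.assoc)
  then show ?thesis unfolding is_sine_poly_def by blast
qed

lemma is_sine_poly_zero: "is_sine_poly (\<lambda>x. 0)"
  unfolding is_sine_poly_def by (rule exI[of _ 0]) (simp add: sine_poly_def)

lemma is_sine_poly_sum:
  assumes "finite I" "\<And>i. i \<in> I \<Longrightarrow> is_sine_poly (f i)"
  shows "is_sine_poly (\<lambda>x. \<Sum>i\<in>I. f i x)"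
  using assms by (induction I rule: finite_induct) (auto intro: is_sine_poly_add is_sine_poly_zero)

lemma is_sine_poly_sin: "is_sine_poly (\<lambda>x. complex_of_real (sin (pi * real k * x)))"
proof (cases "k = 0")
  case True then show ?thesis using is_sine_poly_zero by simp
next
  case False
  have "complex_of_real (sin (pi * real k * x)) = sine_poly (\<lambda>j. if j = k then 1 / sqrt 2 else 0) {1..k} x" for x
  proof -
    have "sine_poly (\<lambda>j. if j = k then 1 / sqrt 2 else 0) {1..k} x =
          (\<Sum>j\<in>{1..k}. if j = k then complex_of_real (sin (pi * real k * x)) else 0)"
      unfolding sine_poly_def by (intro sum.cong) (auto simp flip: of_real_mult)
    also have "\<dots> = complex_of_real (sin (pi * real k * x))" using False by (subst sum.delta) auto
    finally show ?thesis by simp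
  qed
  then show ?thesis unfolding is_sine_poly_def by blast
qed

lemma is_sine_poly_mult_cos:
  assumes "is_sine_poly f"
  shows "is_sine_poly (\<lambda>x. f x * complex_of_real (cos (pi * x)))"
proof -
  obtain K b where f: "\<forall>x. f x = sine_poly b {1..K} x" using assms unfolding is_sine_poly_def by auto
  have "complex_of_real (sqrt 2 * sin (pi * real k * x)) * complex_of_real (cos (pi * x)) =
        complex_of_real (sqrt 2 / 2) *
          (complex_of_real (sin (pi * real (k + 1) * x)) + complex_of_real (sin (pi * real (k - 1) * x)))"
    if "1 \<le> k" for k x
  proof -
    have "sin (pi * real (k + 1) * x) + sin (pi * real (k - 1) * x) = 2 * sin (pi * real k * x) * cos (pi * x)"
      using that by (simp add: of_nat_diff algebra_simps sin_add sin_diff)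
    then show ?thesis unfolding of_real_mult[symmetric] of_real_add[symmetric] by simp
  qed
  then have "f x * complex_of_real (cos (pi * x)) =
     (\<Sum>k\<in>{1..K}. (b k * complex_of_real (sqrt 2 / 2)) *
        (complex_of_real (sin (pi * real (k + 1) * x)) + complex_of_real (sin (pi * real (k - 1) * x))))" for x
    unfolding f[rule_format] sine_poly_def sum_distrib_right
    by (intro sum.cong refl) (simp add: mult.assoc)
  moreover have "is_sine_poly (\<lambda>x. \<Sum>k\<in>{1..K}. (b k * complex_of_real (sqrt 2 / 2)) *
        (complex_of_real (sin (pi * real (k + 1) * x)) + complex_of_real (sin (pi * real (k - 1) * x))))"
    by (intro is_sine_poly_sum is_sine_poly_cmult is_sine_poly_add is_sine_poly_sin) auto
  ultimately show ?thesis by simp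
qed

lemma is_sine_poly_sin_mult_cos_power: "is_sine_poly (\<lambda>x. complex_of_real (sin (pi * x)) * complex_of_real (cos (pi * x)) ^ i)"
proof (induction i)
  case 0
  then show ?case using is_sine_poly_sin[of 1] by simp
next
  case (Suc i)
  from is_sine_poly_mult_cos[OF Suc] show ?case by (simp add: mult_ac)
qed

lemma is_sine_poly_sin_mult_poly_cos:
  fixes p :: "real \<Rightarrow> complex"
  assumes "polynomial_function p"
  shows "is_sine_poly (\<lambda>x. complex_of_real (sin (pi * x)) * p (cos (pi * x)))"
proof -
  have rp: "real_polynomial_function (\<lambda>x. inner (p x) b)" if "b \<in> Basis" for b
    using assms that polynomial_function_iff_Basis_inner by blast
  have B: "1 \<in> (Basis::complex set)" "\<i> \<in> (Basis::complex set)" by (simp_all add: Basis_complex_def)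
  have e1: "(\<lambda>x. inner (p x) 1) = (\<lambda>x. Re (p x))" and e2: "(\<lambda>x. inner (p x) \<i>) = (\<lambda>x. Im (p x))"
    by (simp_all add: inner_complex_def)
  have "real_polynomial_function (\<lambda>x. Re (p x))" "real_polynomial_function (\<lambda>x. Im (p x))"
    using rp[OF B(1)] rp[OF B(2)] unfolding e1 e2 by auto
  then obtain a n a' n' where a: "(\<lambda>x. Re (p x)) = (\<lambda>x. \<Sum>i\<le>n. a i * x ^ i)"
      and a': "(\<lambda>x. Im (p x)) = (\<lambda>x. \<Sum>i\<le>n'. a' i * x ^ i)"
    unfolding real_polynomial_function_iff_sum by metis
  have pe: "p t = (\<Sum>i\<le>n. complex_of_real (a i) * complex_of_real t ^ i) +
                 \<i> * (\<Sum>i\<le>n'. complex_of_real (a' i) * complex_of_real t ^ i)" for t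
  proof -
    have "p t = complex_of_real (Re (p t)) + \<i> * complex_of_real (Im (p t))" by (simp add: complex_eq)
    also have "Re (p t) = (\<Sum>i\<le>n. a i * t ^ i)" using fun_cong[OF a, of t] by simp
    also have "Im (p t) = (\<Sum>i\<le>n'. a' i * t ^ i)" using fun_cong[OF a', of t] by simp
    finally show ?thesis by simp
  qed
  have eq: "complex_of_real (sin (pi * x)) * p (cos (pi * x)) =
     (\<Sum>i\<le>n. complex_of_real (a i) * (complex_of_real (sin (pi * x)) * complex_of_real (cos (pi * x)) ^ i)) +
     \<i> * (\<Sum>i\<le>n'. complex_of_real (a' i) * (complex_of_real (sin (pi * x)) * complex_of_real (cos (pi * x)) ^ i))" for x
    unfolding pe by (simp add: distrib_left sum_distrib_left mult_ac)
  show ?thesis unfolding eq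
    by (intro is_sine_poly_add is_sine_poly_cmult is_sine_poly_sum is_sine_poly_sin_mult_cos_power) auto
qed

text \<open>Since \<open>\<phi>\<close> vanishes near \<open>0\<close> and \<open>1\<close>, the quotient \<open>\<phi>(x) / sin(\<pi> x)\<close> is a continuous
  function of \<open>cos(\<pi> x)\<close>; below \<open>sin(\<pi> x)\<close> is replaced by its minimum on \<open>[\<delta>, 1 - \<delta>]\<close>.\<close>
lemma continuous_factor_sin_pi:
  fixes \<phi> :: "real \<Rightarrow> complex"
  assumes cont: "continuous_on UNIV \<phi>" and d: "0 < \<delta>" "\<delta> \<le> 1/2"
    and supp: "\<And>x. x \<le> \<delta> \<or> 1 - \<delta> \<le> x \<Longrightarrow> \<phi> x = 0"
  shows "\<exists>\<Psi>. continuous_on {-1..1} \<Psi> \<and>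
              (\<forall>x\<in>{0..1}. \<phi> x = complex_of_real (sin (pi * x)) * \<Psi> (cos (pi * x)))"
proof -
  have "\<exists>x0\<in>{\<delta>..1-\<delta>}. \<forall>y\<in>{\<delta>..1-\<delta>}. sin (pi * x0) \<le> sin (pi * y)"
    by (rule continuous_attains_inf) (use d in \<open>auto intro!: continuous_intros\<close>)
  then obtain x0 where x0: "x0 \<in> {\<delta>..1-\<delta>}" and mn: "\<And>y. y \<in> {\<delta>..1-\<delta>} \<Longrightarrow> sin (pi * x0) \<le> sin (pi * y)"
    by blast
  define s1 where "s1 = sin (pi * x0)"
  have s1: "0 < s1" unfolding s1_def using x0 d by (intro sin_gt_zero) auto
  define \<Psi> where "\<Psi> t = \<phi> (arccos t / pi) / complex_of_real (sqrt (max (1 - t\<^sup>2) (s1\<^sup>2)))" for t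
  have "0 < max (1 - t\<^sup>2) (s1\<^sup>2)" for t using s1 by (simp add: less_max_iff_disj)
  then have "max (1 - t\<^sup>2) (s1\<^sup>2) \<noteq> 0" for t by (metis order_less_irrefl)
  then have "continuous_on {-1..1} \<Psi>"
    unfolding \<Psi>_def
    by (intro continuous_on_divide continuous_on_compose2[OF cont] continuous_intros) auto
  moreover have "\<phi> x = complex_of_real (sin (pi * x)) * \<Psi> (cos (pi * x))" if x: "x \<in> {0..1}" for x
  proof -
    have ac: "arccos (cos (pi * x)) / pi = x" using x by (subst arccos_cos) auto
    show ?thesis
    proof (cases "\<phi> x = 0")
      case False
      then have "\<not> (x \<le> \<delta> \<or> 1 - \<delta> \<le> x)" using supp by blast
      then have "x \<in> {\<delta>..1-\<delta>}" by auto
      then have sge: "s1 \<le> sin (pi * x)" unfolding s1_def using mn by blast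
      then have "s1\<^sup>2 \<le> (sin (pi * x))\<^sup>2" using s1 by (intro power_mono) auto
      then have "sqrt (max (1 - (cos (pi * x))\<^sup>2) (s1\<^sup>2)) = sin (pi * x)"
        using sge s1 by (simp add: max_def sin_squared_eq[symmetric])
      moreover have "sin (pi * x) \<noteq> 0" using sge s1 by simp
      ultimately show ?thesis unfolding \<Psi>_def ac by simp
    qed (simp add: \<Psi>_def ac)
  qed
  ultimately show ?thesis by blast
qed

lemma sine_poly_uniform_approx:
  fixes \<phi> :: "real \<Rightarrow> complex"
  assumes cont: "continuous_on UNIV \<phi>" and d: "0 < \<delta>" "\<delta> \<le> 1/2"
    and supp: "\<And>x. x \<le> \<delta> \<or> 1 - \<delta> \<le> x \<Longrightarrow> \<phi> x = 0" and eta: "0 < \<eta>"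
  shows "\<exists>K \<beta>. \<forall>x\<in>{0..1}. cmod (\<phi> x - sine_poly \<beta> {1..K} x) \<le> \<eta>"
proof -
  obtain \<Psi> where \<Psi>: "continuous_on {-1..1} \<Psi>"
    and \<phi>: "\<And>x. x \<in> {0..1} \<Longrightarrow> \<phi> x = complex_of_real (sin (pi * x)) * \<Psi> (cos (pi * x))"
    using continuous_factor_sin_pi[OF cont d supp] by blast
  obtain p where p: "polynomial_function p" and p\<Psi>: "\<And>t. t \<in> {-1..1} \<Longrightarrow> norm (\<Psi> t - p t) < \<eta>"
    using Stone_Weierstrass_polynomial_function[OF compact_Icc \<Psi> eta] by blast
  obtain K \<beta> where Kb: "\<forall>x. complex_of_real (sin (pi * x)) * p (cos (pi * x)) = sine_poly \<beta> {1..K} x"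
    using is_sine_poly_sin_mult_poly_cos[OF p] unfolding is_sine_poly_def by blast
  have "cmod (\<phi> x - sine_poly \<beta> {1..K} x) \<le> \<eta>" if x: "x \<in> {0..1}" for x
  proof -
    have "\<phi> x - sine_poly \<beta> {1..K} x = complex_of_real (sin (pi * x)) * (\<Psi> (cos (pi * x)) - p (cos (pi * x)))"
      using \<phi>[OF x] spec[OF Kb, of x] by (simp add: right_diff_distrib)
    then have "cmod (\<phi> x - sine_poly \<beta> {1..K} x) = \<bar>sin (pi * x)\<bar> * cmod (\<Psi> (cos (pi * x)) - p (cos (pi * x)))"
      by (simp add: norm_mult)
    also have "\<dots> \<le> 1 * \<eta>"
      by (intro mult_mono abs_sin_le_one less_imp_le[OF p\<Psi>]) auto
    finally show ?thesis by simp
  qed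
  then show ?thesis by blast
qed

definition radial_trunc :: "real \<Rightarrow> complex \<Rightarrow> complex" where
  "radial_trunc M z = z * complex_of_real (M / max M (cmod z))"

lemma norm_radial_trunc_le:
  assumes "0 < M"
  shows "cmod (radial_trunc M z) \<le> M"
proof (cases "cmod z \<le> M")
  case True
  then show ?thesis using assms by (simp add: radial_trunc_def norm_mult max_def)
next
  case False
  have cz: "0 < cmod z" using False assms by linarith
  have mx: "max M (cmod z) = cmod z" using False by simp
  have "cmod (radial_trunc M z) = cmod z * \<bar>M / cmod z\<bar>"
    unfolding radial_trunc_def mx by (simp only: norm_mult norm_of_real)
  also have "\<bar>M / cmod z\<bar> = M / cmod z" using assms cz by (intro abs_of_nonneg divide_nonneg_nonneg) auto
  also have "cmod z * (M / cmod z) = M" using cz by simp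
  finally show ?thesis by simp
qed

lemma radial_trunc_eq_self:
  assumes "cmod z \<le> M"
  shows "radial_trunc M z = z"
proof (cases "M = 0")
  case True
  then have "z = 0" using assms by simp
  then show ?thesis by (simp add: radial_trunc_def)
next
  case False
  then have "0 < M" using assms norm_ge_zero[of z] by linarith
  then show ?thesis using assms by (simp add: radial_trunc_def max_def)
qed

lemma norm_diff_radial_trunc_le:
  assumes "0 < M"
  shows "cmod (z - radial_trunc M z) \<le> cmod z"
proof -
  have f: "0 \<le> M / max M (cmod z)" "M / max M (cmod z) \<le> 1" using assms by (auto simp: max_def divide_le_eq)
  have "z - radial_trunc M z = z * complex_of_real (1 - M / max M (cmod z))"
    by (simp add: radial_trunc_def algebra_simps)
  then have "cmod (z - radial_trunc M z) = cmod z * \<bar>1 - M / max M (cmod z)\<bar>" by (simp only: norm_mult norm_of_real)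
  also have "\<dots> \<le> cmod z * 1" using f by (intro mult_left_mono) auto
  finally show ?thesis by simp
qed

lemma continuous_on_radial_trunc:
  assumes "0 < M"
  shows "continuous_on UNIV (radial_trunc M)"
proof -
  have "\<forall>z\<in>UNIV. max M (cmod z) \<noteq> 0" using assms by (auto simp: max_def)
  then show ?thesis unfolding radial_trunc_def by (intro continuous_intros) auto
qed

lemma radial_trunc_measurable[measurable]:
  assumes [measurable]: "f \<in> borel_measurable M"
  shows "(\<lambda>x. radial_trunc c (f x)) \<in> borel_measurable M"
  unfolding radial_trunc_def by measurable

lemma L2_sqnorm_dominated_tendsto_0:
  assumes f: "\<And>n. f n \<in> borel_measurable lborel_01" and g: "g \<in> L2_01"
    and dom: "\<And>n x. x \<in> {0<..<1} \<Longrightarrow> cmod (f n x) \<le> cmod (g x)"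
    and lim: "AE x in lborel. x \<in> {0<..<1} \<longrightarrow> (\<lambda>n. f n x) \<longlonglongrightarrow> 0"
  shows "(\<lambda>n. L2_sqnorm (f n)) \<longlonglongrightarrow> 0"
proof -
  have [measurable]: "g \<in> borel_measurable lborel_01" and "L2_sqnorm g < \<infinity>"
    using g by (auto simp: L2_01_iff)
  have "(\<lambda>n. \<integral>\<^sup>+x. ennreal ((cmod (f n x))\<^sup>2) \<partial>lborel_01) \<longlonglongrightarrow> (\<integral>\<^sup>+x. 0 \<partial>lborel_01)"
  proof (rule nn_integral_dominated_convergence[where w="\<lambda>x. ennreal ((cmod (g x))\<^sup>2)"])
    show "(\<lambda>x. ennreal ((cmod (f n x))\<^sup>2)) \<in> borel_measurable lborel_01" for n
      using f[of n] by measurable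
    show "AE x in lborel_01. ennreal ((cmod (f n x))\<^sup>2) \<le> ennreal ((cmod (g x))\<^sup>2)" for n
      using dom by (subst AE_restrict_space_iff) (auto intro!: ennreal_leI power_mono)
    show "(\<integral>\<^sup>+x. ennreal ((cmod (g x))\<^sup>2) \<partial>lborel_01) < \<infinity>"
      using \<open>L2_sqnorm g < \<infinity>\<close> by (simp add: L2_sqnorm_restrict)
    have "(\<lambda>n. ennreal ((cmod (f n x))\<^sup>2)) \<longlonglongrightarrow> 0" if "(\<lambda>n. f n x) \<longlonglongrightarrow> 0" for x
    proof -
      have "(\<lambda>n. (cmod (f n x))\<^sup>2) \<longlonglongrightarrow> (cmod 0)\<^sup>2" using that by (intro tendsto_intros)
      from tendsto_ennrealI[OF this] show ?thesis by simp
    qed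
    then show "AE x in lborel_01. (\<lambda>n. ennreal ((cmod (f n x))\<^sup>2)) \<longlonglongrightarrow> 0"
      using lim by (subst AE_restrict_space_iff) (auto elim!: eventually_mono)
  qed auto
  then show ?thesis by (simp add: L2_sqnorm_restrict)
qed

lemma L2_radial_trunc_approx:
  assumes h: "h \<in> L2_01" and eps: "0 < \<epsilon>"
  shows "\<exists>M>0. L2_sqnorm (\<lambda>x. h x - radial_trunc M (h x)) < ennreal \<epsilon>"
proof -
  have [measurable]: "h \<in> borel_measurable lborel_01" using h by (simp add: L2_01_iff)
  have "(\<lambda>m. L2_sqnorm (\<lambda>x. h x - radial_trunc (real m + 1) (h x))) \<longlonglongrightarrow> 0"
  proof (rule L2_sqnorm_dominated_tendsto_0[OF _ h])
    show "cmod (h x - radial_trunc (real m + 1) (h x)) \<le> cmod (h x)" for m x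
      by (rule norm_diff_radial_trunc_le) simp
    have ev: "\<forall>\<^sub>F m in sequentially. h x - radial_trunc (real m + 1) (h x) = 0" for x
      by (intro eventually_sequentiallyI[of "nat \<lceil>cmod (h x)\<rceil>"]) (simp add: radial_trunc_eq_self)
    show "AE x in lborel. x \<in> {0<..<1} \<longrightarrow> (\<lambda>m. h x - radial_trunc (real m + 1) (h x)) \<longlonglongrightarrow> 0"
      by (intro AE_I2 impI tendsto_eventually ev)
  qed measurable
  then have "\<forall>\<^sub>F m in sequentially. L2_sqnorm (\<lambda>x. h x - radial_trunc (real m + 1) (h x)) < ennreal \<epsilon>"
    using eps by (intro order_tendstoD(2)) auto
  then obtain m where "L2_sqnorm (\<lambda>x. h x - radial_trunc (real m + 1) (h x)) < ennreal \<epsilon>"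
    by (auto dest: eventually_happens)
  then show ?thesis by (intro exI[of _ "real m + 1"]) auto
qed

definition cutoff :: "nat \<Rightarrow> real \<Rightarrow> real" where
  "cutoff n x = max 0 (min 1 (real n * min x (1 - x) - 1))"

lemma continuous_on_cutoff: "continuous_on UNIV (cutoff n)"
  unfolding cutoff_def by (intro continuous_intros)

lemma cutoff_bounds: "0 \<le> cutoff n x" "cutoff n x \<le> 1" unfolding cutoff_def by auto

lemma cutoff_zero:
  assumes "1 \<le> n" "x \<le> 1 / real n \<or> 1 - 1 / real n \<le> x"
  shows "cutoff n x = 0"
proof -
  have "min x (1 - x) \<le> 1 / real n" using assms by auto
  then have "real n * min x (1 - x) \<le> real n * (1 / real n)" using assms by (intro mult_left_mono) auto
  then have "real n * min x (1 - x) \<le> 1" using assms by simp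
  then show ?thesis unfolding cutoff_def by simp
qed

lemma cutoff_lim:
  assumes "0 < x" "x < 1"
  shows "(\<lambda>n. cutoff n x) \<longlonglongrightarrow> 1"
proof -
  have m: "0 < min x (1 - x)" using assms by simp
  have "\<forall>\<^sub>F n in sequentially. cutoff n x = 1"
  proof (rule eventually_sequentiallyI[of "nat \<lceil>2 / min x (1 - x)\<rceil>"])
    fix n assume "nat \<lceil>2 / min x (1 - x)\<rceil> \<le> n"
    then have "2 / min x (1 - x) \<le> real n" by linarith
    then have "2 \<le> real n * min x (1 - x)" using m by (simp add: field_simps)
    then show "cutoff n x = 1" unfolding cutoff_def by simp
  qed
  then show ?thesis by (rule tendsto_eventually)
qed

lemma continuous_ae_approx_01:
  fixes u :: "real \<Rightarrow> complex"
  assumes "u \<in> borel_measurable lborel_01"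
  obtains g where "\<And>n. continuous_on UNIV (g n)"
    "AE x in lborel. x \<in> {0<..<1} \<longrightarrow> (\<lambda>n. g n x) \<longlonglongrightarrow> u x"
proof -
  define u' where "u' x = indicator {0<..<1} x *\<^sub>R u x" for x :: real
  have "u' \<in> borel_measurable borel"
    using assms unfolding u'_def by (subst (asm) borel_measurable_restrict_space_iff) auto
  then have "u' \<in> borel_measurable (lebesgue_on UNIV)"
    unfolding lebesgue_on_UNIV_eq by (intro measurable_completion) simp
  then have "u' measurable_on UNIV" by (subst measurable_on_iff_borel_measurable) auto
  then obtain Z g where "negligible Z" and gc: "\<And>n. continuous_on UNIV (g n)"
      and gl: "\<And>x. x \<notin> Z \<Longrightarrow> (\<lambda>n. g n x) \<longlonglongrightarrow> u' x"
    unfolding measurable_on_def by auto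
  then have "AE x in lebesgue. x \<notin> Z" by (intro AE_not_in) (simp add: negligible_iff_null_sets)
  then have "AE x in lborel. x \<notin> Z" by (simp add: AE_completion_iff)
  then have "AE x in lborel. x \<in> {0<..<1} \<longrightarrow> (\<lambda>n. g n x) \<longlonglongrightarrow> u x"
  proof (rule AE_mp, intro AE_I2 impI)
    fix x assume "x \<notin> Z" "x \<in> {0<..<1}"
    then show "(\<lambda>n. g n x) \<longlonglongrightarrow> u x" using gl[of x] by (simp add: u'_def)
  qed
  with gc show ?thesis using that by blast
qed

text \<open>Continuous approximants converging a.e. are clipped to the disc of radius \<open>M\<close> and
  multiplied by a cutoff vanishing near \<open>0\<close> and \<open>1\<close>; dominated convergence applies.\<close>
lemma continuous_compact_support_approx:
  assumes um: "u \<in> borel_measurable lborel_01" and ub: "\<And>x. cmod (u x) \<le> M" and M: "0 < M"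
    and eps: "0 < \<epsilon>"
  shows "\<exists>\<phi> \<delta>. continuous_on UNIV \<phi> \<and> 0 < \<delta> \<and> \<delta> \<le> 1/2 \<and> (\<forall>x. x \<le> \<delta> \<or> 1 - \<delta> \<le> x \<longrightarrow> \<phi> x = 0) \<and>
          L2_sqnorm (\<lambda>x. u x - \<phi> x) < ennreal \<epsilon>"
proof -
  obtain g where gc: "\<And>n. continuous_on UNIV (g n)"
    and gl: "AE x in lborel. x \<in> {0<..<1} \<longrightarrow> (\<lambda>n. g n x) \<longlonglongrightarrow> u x"
    using continuous_ae_approx_01[OF um] by blast
  define v where "v n x = radial_trunc M (g n x) * complex_of_real (cutoff n x)" for n x
  have vc: "continuous_on UNIV (v n)" for n
    unfolding v_def using gc continuous_on_radial_trunc[OF M] continuous_on_cutoff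
    by (intro continuous_intros continuous_on_compose2[OF continuous_on_radial_trunc[OF M], of UNIV "g n"]) auto
  have vb: "cmod (v n x) \<le> M" for n x
  proof -
    have "cmod (v n x) = cmod (radial_trunc M (g n x)) * \<bar>cutoff n x\<bar>" unfolding v_def by (simp add: norm_mult)
    also have "\<dots> \<le> M * 1" using cutoff_bounds norm_radial_trunc_le[OF M] M by (intro mult_mono) auto
    finally show ?thesis by simp
  qed
  have "(\<lambda>n. L2_sqnorm (\<lambda>x. u x - v n x)) \<longlonglongrightarrow> 0"
  proof (rule L2_sqnorm_dominated_tendsto_0[where g="\<lambda>_. complex_of_real (2 * M)"])
    show "(\<lambda>x. u x - v n x) \<in> borel_measurable lborel_01" for n
      using um continuous_imp_measurable_01[OF vc] by measurable
    have "L2_sqnorm (\<lambda>_. complex_of_real (2 * M)) \<le> ennreal ((2 * M)\<^sup>2)"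
      using M by (intro L2_sqnorm_le_sup) simp
    then show "(\<lambda>_. complex_of_real (2 * M)) \<in> L2_01"
      by (auto simp: L2_01_iff intro: le_less_trans)
    show "cmod (u x - v n x) \<le> cmod (complex_of_real (2 * M))" for n x
      using norm_triangle_ineq4[of "u x" "v n x"] ub[of x] vb[of n x] M by simp
    show "AE x in lborel. x \<in> {0<..<1} \<longrightarrow> (\<lambda>n. u x - v n x) \<longlonglongrightarrow> 0"
      using gl
    proof (rule AE_mp, intro AE_I2 impI)
      fix x assume x01: "x \<in> {0<..<1}" and "x \<in> {0<..<1} \<longrightarrow> (\<lambda>n. g n x) \<longlonglongrightarrow> u x"
      then have "(\<lambda>n. radial_trunc M (g n x)) \<longlonglongrightarrow> radial_trunc M (u x)"
        by (intro continuous_on_tendsto_compose[OF continuous_on_radial_trunc[OF M]]) auto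
      moreover have "(\<lambda>n. complex_of_real (cutoff n x)) \<longlonglongrightarrow> complex_of_real 1"
        using cutoff_lim[of x] x01 by (intro tendsto_of_real) auto
      ultimately have "(\<lambda>n. v n x) \<longlonglongrightarrow> u x * 1"
        unfolding v_def using radial_trunc_eq_self[OF ub] by (intro tendsto_mult) auto
      then show "(\<lambda>n. u x - v n x) \<longlonglongrightarrow> 0"
        using tendsto_diff[OF tendsto_const[of "u x"]] by fastforce
    qed
  qed
  then have "\<forall>\<^sub>F n in sequentially. L2_sqnorm (\<lambda>x. u x - v n x) < ennreal \<epsilon> \<and> 2 \<le> n"
    using eps by (intro eventually_conj order_tendstoD(2)) (auto simp: eventually_ge_at_top)
  then obtain n where n: "L2_sqnorm (\<lambda>x. u x - v n x) < ennreal \<epsilon>" "2 \<le> n"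
    by (auto dest: eventually_happens)
  moreover have "\<forall>x. x \<le> 1 / real n \<or> 1 - 1 / real n \<le> x \<longrightarrow> v n x = 0"
    using cutoff_zero[of n] n(2) by (auto simp: v_def)
  moreover have "1 / real n \<le> 1/2" using n(2) by (simp add: field_simps)
  ultimately show ?thesis using vc[of n]
    by (intro exI[of _ "v n"] exI[of _ "1 / real n"]) auto
qed

lemma sine_poly_dense_L2:
  assumes h: "h \<in> L2_01" and eps: "0 < \<epsilon>"
  shows "\<exists>K \<beta>. L2_dist2 h (sine_poly \<beta> {1..K}) < ennreal \<epsilon>"
proof -
  define e where "e = \<epsilon> / 16"
  have e: "0 < e" using eps unfolding e_def by simp
  have hm: "h \<in> borel_measurable lborel_01" using h by (simp add: L2_01_iff)
  obtain M where M: "0 < M" and hu: "L2_sqnorm (\<lambda>x. h x - radial_trunc M (h x)) < ennreal e"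
    using L2_radial_trunc_approx[OF h e] by blast
  define u where "u x = radial_trunc M (h x)" for x
  have um: "u \<in> borel_measurable lborel_01" unfolding u_def using hm by measurable
  obtain \<phi> \<delta> where phic: "continuous_on UNIV \<phi>" and d: "0 < \<delta>" "\<delta> \<le> 1/2"
      and supp: "\<forall>x. x \<le> \<delta> \<or> 1 - \<delta> \<le> x \<longrightarrow> \<phi> x = 0" and u\<phi>: "L2_sqnorm (\<lambda>x. u x - \<phi> x) < ennreal e"
    using continuous_compact_support_approx[OF um _ M e] norm_radial_trunc_le[OF M] unfolding u_def by blast
  obtain K \<beta> where "\<forall>x\<in>{0..1}. cmod (\<phi> x - sine_poly \<beta> {1..K} x) \<le> sqrt e"
    using sine_poly_uniform_approx[OF phic d _ , of "sqrt e"] supp e by auto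
  then have \<phi>s: "L2_sqnorm (\<lambda>x. \<phi> x - sine_poly \<beta> {1..K} x) \<le> ennreal e"
    using L2_sqnorm_le_sup[of "\<lambda>x. \<phi> x - sine_poly \<beta> {1..K} x" "sqrt e"] e by simp
  have \<phi>m: "\<phi> \<in> borel_measurable lborel_01" by (rule continuous_imp_measurable_01[OF phic])
  have "L2_dist2 h (sine_poly \<beta> {1..K}) \<le> 2 * L2_dist2 h u + 2 * L2_dist2 u (sine_poly \<beta> {1..K})"
    by (rule L2_dist2_triangle[OF hm um sine_poly_measurable])
  also have "\<dots> \<le> 2 * L2_dist2 h u + 2 * (2 * L2_dist2 u \<phi> + 2 * L2_dist2 \<phi> (sine_poly \<beta> {1..K}))"
    by (intro add_left_mono mult_left_mono L2_dist2_triangle[OF um \<phi>m sine_poly_measurable]) simp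
  also have "\<dots> \<le> 2 * ennreal e + 2 * (2 * ennreal e + 2 * ennreal e)"
    using hu u\<phi> \<phi>s unfolding L2_dist2_eq_sqnorm u_def
    by (intro add_mono mult_left_mono) auto
  also have "\<dots> = (2 + 2 * (2 + 2)) * ennreal e" by (simp only: distrib_right distrib_left mult.assoc)
  also have "\<dots> = ennreal (10 * e)" using e by (simp add: ennreal_mult)
  also have "\<dots> < ennreal \<epsilon>" using eps unfolding e_def by (simp add: ennreal_less_iff)
  finally show ?thesis by blast
qed


lemma PDCP_if_L2_sine_sum_recip:
  assumes f: "L2_sine_sum recip_coeff f"
  shows "PDCP f"
  unfolding PDCP_def
proof (intro conjI ballI allI impI)
  show "f \<in> L2_01" using L2_sine_sumD[OF f] by simp
next
  fix h :: "real \<Rightarrow> complex" and \<epsilon> :: real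
  assume h: "h \<in> L2_01" and eps: "0 < \<epsilon>"
  obtain K \<beta> where hS: "L2_dist2 h (sine_poly \<beta> {1..K}) < ennreal (\<epsilon> / 4)"
    using sine_poly_dense_L2[OF h, of "\<epsilon> / 4"] eps by auto
  define b where "b t = (if t \<in> {1..K} then \<beta> t else 0)" for t
  obtain N c where supp: "\<forall>n. n \<notin> {1..N} \<longrightarrow> c n = 0"
    and cb: "\<forall>n. (\<Sum>t\<in>{1..n}. (cmod (conv_recip c t - b t))\<^sup>2) \<le> \<epsilon> / 16"
    using conv_recip_approx[of "\<epsilon> / 16" K \<beta>] eps unfolding b_def by auto
  define G where "G x = (\<Sum>n\<in>{1..N}. c n * odd_ext f (real n * x))" for x
  have G: "L2_sine_sum (conv_recip c) G"
    unfolding G_def by (rule L2_sine_sum_conv_recip[OF f]) (use supp in auto)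
  have "sine_poly b {1..K} = sine_poly \<beta> {1..K}"
    unfolding sine_poly_def b_def by (intro ext sum.cong) auto
  moreover have "L2_sine_sum b (sine_poly b {1..K})"
    by (rule L2_sine_sum_sine_poly) (auto simp: b_def)
  ultimately have S: "L2_sine_sum b (sine_poly \<beta> {1..K})" by simp
  have "L2_dist2 G (sine_poly \<beta> {1..K}) \<le> 2 * ennreal (\<epsilon> / 16)"
    by (rule L2_dist2_le_coeff_dist[OF G S]) (use cb in simp)
  also have "2 * ennreal (\<epsilon> / 16) = ennreal (\<epsilon> / 8)"
    using ennreal_mult'[of 2 "\<epsilon> / 16"] by simp
  finally have SG: "L2_dist2 (sine_poly \<beta> {1..K}) G \<le> ennreal (\<epsilon> / 8)"
    by (simp add: L2_dist2_commute)
  have "L2_dist2 h G \<le> 2 * L2_dist2 h (sine_poly \<beta> {1..K}) + 2 * L2_dist2 (sine_poly \<beta> {1..K}) G"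
    using h L2_sine_sumD(2)[OF G] by (intro L2_dist2_triangle sine_poly_measurable) (auto simp: L2_01_iff)
  also have "\<dots> \<le> 2 * ennreal (\<epsilon> / 4) + 2 * ennreal (\<epsilon> / 8)"
    using hS SG by (intro add_mono mult_left_mono) auto
  also have "\<dots> = ennreal (3 * \<epsilon> / 4)"
    using ennreal_mult'[of 2 "\<epsilon> / 4"] ennreal_mult'[of 2 "\<epsilon> / 8"] ennreal_plus[of "\<epsilon> / 2" "\<epsilon> / 4"] eps
    by simp
  also have "\<dots> < ennreal \<epsilon>" using eps by (simp add: ennreal_less_iff)
  finally have "L2_dist2 h G < ennreal \<epsilon>" .
  with L2_sine_sumD(1)[OF G] show "\<exists>N c. (\<lambda>x. \<Sum>n\<in>{1..N}. c n * odd_ext f (real n * x)) \<in> L2_01 \<and>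
        L2_dist2 h (\<lambda>x. \<Sum>n\<in>{1..N}. c n * odd_ext f (real n * x)) < ennreal \<epsilon>"
    unfolding G_def by blast
qed

theorem mainTheorem14:
  shows "(\<exists>F. L2_sine_sum (\<lambda>k. 1 / of_nat k) F) \<and>
         (\<forall>f1. L2_sine_sum (\<lambda>k. 1 / of_nat k) f1 \<longrightarrow> PDCP f1 \<and> \<not> in_range_V f1)"
proof -
  have "(\<lambda>k. 1 / of_nat k) = recip_coeff" by (simp add: fun_eq_iff recip_coeff_def)
  then show ?thesis
    using L2_sine_sum_recip_sawtooth PDCP_if_L2_sine_sum_recip L2_sine_sum_recip_not_in_range_V
    by auto
qed

end
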